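(* In the $\beta$-model, suppose the true parameter satisfies $\beta_1=\cdots=\beta_r$, for some $r\in\{1,\dots,n-1\}$. If $$\left(\frac{b_n}{c_n}+\frac{b_n^3}{c_n^3}\cdot\frac{r(n-r)}{n^2}\right)\left(b_n+\frac{b_n^3}{c_n^2}\Big(\frac{r^{1/2}(n-r)^{1/2}}{n^{3/2}}+\frac{n-r}{n}\Big)\right)=o\left(\sqrt{\frac{n}{\log n}}\right),$$ then with probability at least $1-2(n-r+1)/n^2$ the restricted MLE $\widehat{\boldsymbol\beta}^0$ exists and satisfies $$\|\widehat{\boldsymbol\beta}^0-\boldsymbol\beta\|_\infty\le C\left(b_n+\frac{b_n^3}{c_n^2}\Big(\frac{r^{1/2}(n-r)^{1/2}}{n^{3/2}}+\frac{n-r}{n}\Big)\right)\sqrt{\frac{\log n}{n}}$$ for an absolute constant $C>0$. Further, if $\widehat{\boldsymbol\beta}^0$ exists, it is unique.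
   Context: $\beta$-model: $a_{ij}=a_{ji}\in\{0,1\}$, $1\le i<j\le n$, independent with $P(a_{ij}=1)=e^{\beta_i+\beta_j}/(1+e^{\beta_i+\beta_j})$, $a_{ii}=0$; $d_i=\sum_{j\ne i}a_{ij}$; $\ell(\boldsymbol\beta)=\sum_i\beta_id_i-\sum_{i<j}\log(1+e^{\beta_i+\beta_j})$. $\widehat{\boldsymbol\beta}^0=\arg\max\{\ell(\boldsymbol\beta):\boldsymbol\beta\in\mathbb R^n,\beta_1=\cdots=\beta_r\}$. $b_n=\max_{i\neq j}(1+e^{\beta_i+\beta_j})^2/e^{\beta_i+\beta_j}$, $c_n=\min_{i\ne j}(\cdot)$ at the true parameter. Asymptotics as $n\to\infty$. *)

theory Defs
  imports "HOL-Analysis.Analysis" "HOL-Library.Landau_Symbols"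
begin

text \<open>Vertices are indexed 0..n-1 (paper: 1..n). A parameter vector in R^n is a
  function nat => real; only the values at indices < n matter (for the restricted
  parameter space we additionally normalise to 0 outside {..<n}).
  A graph on n vertices is its edge set E, a subset of the pairs (i,j) with i<j<n.\<close>

definition vpairs :: "nat \<Rightarrow> (nat \<times> nat) set" where
  "vpairs n = {(i,j). i < j \<and> j < n}"

definition edge_prob :: "(nat \<Rightarrow> real) \<Rightarrow> nat \<Rightarrow> nat \<Rightarrow> real" where
  "edge_prob \<beta> i j = exp (\<beta> i + \<beta> j) / (1 + exp (\<beta> i + \<beta> j))"

definition graph_prob :: "nat \<Rightarrow> (nat \<Rightarrow> real) \<Rightarrow> (nat \<times> nat) set \<Rightarrow> real" where
  "graph_prob n \<beta> E =
     (\<Prod>(i,j)\<in>vpairs n. if (i,j) \<in> E then edge_prob \<beta> i j else 1 - edge_prob \<beta> i j)"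

definition beta_prob :: "nat \<Rightarrow> (nat \<Rightarrow> real) \<Rightarrow> ((nat \<times> nat) set \<Rightarrow> bool) \<Rightarrow> real" where
  "beta_prob n \<beta> P = (\<Sum>E\<in>Pow (vpairs n). if P E then graph_prob n \<beta> E else 0)"

definition adj :: "(nat \<times> nat) set \<Rightarrow> nat \<Rightarrow> nat \<Rightarrow> real" where
  "adj E i j = (if i \<noteq> j \<and> (min i j, max i j) \<in> E then 1 else 0)"

definition degree :: "nat \<Rightarrow> (nat \<times> nat) set \<Rightarrow> nat \<Rightarrow> real" where
  "degree n E i = (\<Sum>j\<in>{..<n} - {i}. adj E i j)"

definition loglik :: "nat \<Rightarrow> (nat \<times> nat) set \<Rightarrow> (nat \<Rightarrow> real) \<Rightarrow> real" where
  "loglik n E \<beta> = (\<Sum>i<n. \<beta> i * degree n E i)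
      - (\<Sum>(i,j)\<in>vpairs n. ln (1 + exp (\<beta> i + \<beta> j)))"

definition restr_space :: "nat \<Rightarrow> nat \<Rightarrow> (nat \<Rightarrow> real) set" where
  "restr_space n r = {\<beta>. (\<forall>i\<ge>n. \<beta> i = 0) \<and> (\<forall>i<r. \<beta> i = \<beta> 0)}"

definition is_restr_mle :: "nat \<Rightarrow> nat \<Rightarrow> (nat \<times> nat) set \<Rightarrow> (nat \<Rightarrow> real) \<Rightarrow> bool" where
  "is_restr_mle n r E b \<longleftrightarrow> b \<in> restr_space n r \<and>
     (\<forall>b'\<in>restr_space n r. loglik n E b' \<le> loglik n E b)"

definition sup_dist :: "nat \<Rightarrow> (nat \<Rightarrow> real) \<Rightarrow> (nat \<Rightarrow> real) \<Rightarrow> real" where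
  "sup_dist n x y = Max ((\<lambda>i. \<bar>x i - y i\<bar>) ` {..<n})"

definition offdiag :: "nat \<Rightarrow> (nat \<times> nat) set" where
  "offdiag n = {(i,j). i < n \<and> j < n \<and> i \<noteq> j}"

definition bn :: "nat \<Rightarrow> (nat \<Rightarrow> real) \<Rightarrow> real" where
  "bn n \<beta> = Max ((\<lambda>(i,j). (1 + exp (\<beta> i + \<beta> j))\<^sup>2 / exp (\<beta> i + \<beta> j)) ` offdiag n)"

definition cn :: "nat \<Rightarrow> (nat \<Rightarrow> real) \<Rightarrow> real" where
  "cn n \<beta> = Min ((\<lambda>(i,j). (1 + exp (\<beta> i + \<beta> j))\<^sup>2 / exp (\<beta> i + \<beta> j)) ` offdiag n)"

definition rate :: "nat \<Rightarrow> nat \<Rightarrow> (nat \<Rightarrow> real) \<Rightarrow> real" where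
  "rate n r \<beta> = bn n \<beta> + (bn n \<beta>)^3 / (cn n \<beta>)^2 *
      (sqrt (real r) * sqrt (real n - real r) / (real n) powr (3/2) + (real n - real r) / real n)"

definition cond_quantity :: "nat \<Rightarrow> nat \<Rightarrow> (nat \<Rightarrow> real) \<Rightarrow> real" where
  "cond_quantity n r \<beta> = (bn n \<beta> / cn n \<beta> + (bn n \<beta>)^3 / (cn n \<beta>)^3 *
      (real r * (real n - real r) / (real n)^2)) * rate n r \<beta>"

end

theory Submission
  imports Defs "HOL-Probability.Hoeffding"
begin

text \<open>
  The vertices split into the block \<open>{..<r}\<close> of tied parameters and \<open>n - r\<close> singletons. By
  Hoeffding's inequality and a union bound over these \<open>n - r + 1\<close> blocks, with probability at least
  \<open>1 - 2 (n - r + 1) / n\<^sup>2\<close> the score at \<open>\<beta>\<close> summed over any block \<open>J\<close> is at most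
  \<open>sqrt (2 |J| n log n)\<close>. On this event let \<open>\<theta>\<close> maximise the likelihood over the restricted box of
  radius \<open>\<delta>\<close> around \<open>\<beta>\<close>. The first-order condition towards \<open>\<beta>\<close> and the strong monotonicity
  of the logistic function bound \<open>\<parallel>\<theta> - \<beta>\<parallel>\<^sub>2\<close>; if a coordinate of \<open>\<theta>\<close> were on the boundary
  of the box, the first-order condition for moving its block inwards would then bound \<open>\<delta>\<close> by a
  multiple of the rate that is smaller than \<open>\<delta>\<close>. So \<open>\<theta>\<close> is interior and, by concavity, a restricted
  MLE. Uniqueness follows from strict convexity of \<open>log (1 + e\<^sup>x)\<close>: the midpoint of two maximisers
  that differ in some pair sum would be strictly better; for \<open>n = 2\<close> there is no maximiser.
\<close>

section \<open>The logistic function\<close>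

definition logistic :: "real \<Rightarrow> real" where
  "logistic x = exp x / (1 + exp x)"

definition softplus :: "real \<Rightarrow> real" where
  "softplus x = ln (1 + exp x)"

definition logistic_deriv :: "real \<Rightarrow> real" where
  "logistic_deriv x = exp x / (1 + exp x)\<^sup>2"

lemma one_plus_exp_pos [simp]: "0 < 1 + exp (x::real)"
  by (simp add: add_pos_pos)

lemma one_plus_exp_nonzero [simp]: "1 + exp (x::real) \<noteq> 0"
  using one_plus_exp_pos[of x] by linarith

lemma has_real_derivative_softplus: "(softplus has_real_derivative logistic x) (at x)"
  unfolding softplus_def logistic_def
  by (rule derivative_eq_intros refl | simp)+

lemma has_real_derivative_logistic: "(logistic has_real_derivative logistic_deriv x) (at x)"
  unfolding logistic_deriv_def logistic_def
  by (rule derivative_eq_intros refl | simp)+ (simp add: field_simps power2_eq_square)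

lemma logistic_pos: "0 < logistic x"
  and logistic_less_one: "logistic x < 1"
  by (auto simp: logistic_def)

lemma logistic_deriv_pos: "0 < logistic_deriv x"
  by (simp add: logistic_deriv_def)

lemma logistic_deriv_le_one: "logistic_deriv x \<le> 1"
proof -
  have "exp x \<le> (1 + exp x)\<^sup>2"
    by (simp add: power2_eq_square algebra_simps add_pos_pos)
  thus ?thesis
    by (simp add: logistic_deriv_def)
qed

lemma logistic_alt_def: "logistic x = 1 - 1 / (1 + exp x)"
  by (simp add: logistic_def field_simps)

lemma logistic_mono: "x \<le> y \<Longrightarrow> logistic x \<le> logistic y"
  unfolding logistic_alt_def by (simp add: frac_le)

lemma softplus_strict_mono: "x < y \<Longrightarrow> softplus x < softplus y"
  by (simp add: softplus_def)

lemma softplus_minus: "softplus (- x) = softplus x - x"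
proof -
  have "1 + exp x = exp x * (1 + exp (- x))"
    by (simp add: algebra_simps exp_minus)
  thus ?thesis
    by (simp add: softplus_def ln_mult)
qed

lemma mean_value_real:
  fixes f f' :: "real \<Rightarrow> real"
  assumes "\<And>z. (f has_real_derivative f' z) (at z)"
  obtains z where "\<bar>z - x\<bar> \<le> \<bar>y - x\<bar>" "min x y \<le> z" "z \<le> max x y" "f y - f x = (y - x) * f' z"
proof (cases x y rule: linorder_cases)
  case less
  with MVT2[OF less, of f f'] assms obtain z where "x < z" "z < y" "f y - f x = (y - x) * f' z"
    by blast
  thus ?thesis using less by (intro that[of z]) auto
next
  case greater
  with MVT2[OF greater, of f f'] assms obtain z where "y < z" "z < x" "f x - f y = (x - y) * f' z"
    by blast
  thus ?thesis using greater by (intro that[of z]) (auto simp: algebra_simps)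
qed (intro that[of x]; simp)

lemma softplus_tangent: "softplus x + logistic x * (y - x) \<le> softplus y"
proof -
  obtain z where z: "min x y \<le> z" "z \<le> max x y" "softplus y - softplus x = (y - x) * logistic z"
    using mean_value_real[OF has_real_derivative_softplus] .
  have "logistic x * (y - x) \<le> logistic z * (y - x)"
  proof (cases "x \<le> y")
    case True thus ?thesis using z by (intro mult_right_mono logistic_mono) auto
  next
    case False thus ?thesis using z by (intro mult_right_mono_neg logistic_mono) auto
  qed
  thus ?thesis using z(3) by (simp add: algebra_simps)
qed

lemma logistic_lipschitz: "\<bar>logistic y - logistic x\<bar> \<le> \<bar>y - x\<bar>"
proof -
  obtain z where "logistic y - logistic x = (y - x) * logistic_deriv z"
    using mean_value_real[OF has_real_derivative_logistic] .
  moreover have "\<bar>logistic_deriv z\<bar> \<le> 1"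
    using logistic_deriv_le_one logistic_deriv_pos[of z] by simp
  ultimately show ?thesis
    by (simp add: abs_mult mult_left_le)
qed

lemma convex_on_softplus: "convex_on UNIV softplus"
  by (rule convex_on_realI[OF _ has_real_derivative_softplus logistic_mono]) auto

lemma softplus_convex:
  "0 \<le> t \<Longrightarrow> t \<le> 1 \<Longrightarrow> softplus ((1 - t) * x + t * y) \<le> (1 - t) * softplus x + t * softplus y"
  using convex_onD[OF convex_on_softplus, of t x y] by simp

lemma softplus_midpoint_strict:
  assumes "x \<noteq> y"
  shows "softplus ((x + y) / 2) < (softplus x + softplus y) / 2"
proof -
  define a b where "a = exp (x / 2)" and "b = exp (y / 2)"
  have exps: "exp x = a\<^sup>2" "exp y = b\<^sup>2" "exp ((x + y) / 2) = a * b"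
    by (simp_all add: a_def b_def power2_eq_square flip: exp_add)
  have pos: "0 < 1 + a * b"
    by (simp add: a_def b_def add_pos_pos)
  have "0 < (a - b)\<^sup>2"
    using assms by (simp add: a_def b_def)
  hence "(1 + a * b)\<^sup>2 < (1 + a\<^sup>2) * (1 + b\<^sup>2)"
    by (simp add: power2_eq_square algebra_simps)
  hence "ln ((1 + a * b)\<^sup>2) < ln ((1 + a\<^sup>2) * (1 + b\<^sup>2))"
    using pos by (simp add: add_pos_nonneg)
  moreover have "ln ((1 + a * b)\<^sup>2) = 2 * softplus ((x + y) / 2)"
    using pos by (simp add: softplus_def exps ln_realpow)
  moreover have "ln ((1 + a\<^sup>2) * (1 + b\<^sup>2)) = softplus x + softplus y"
    by (simp add: softplus_def exps[symmetric] ln_mult)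
  ultimately show ?thesis
    by simp
qed

lemma logistic_deriv_lower:
  assumes "\<bar>z - x\<bar> \<le> t"
  shows "logistic_deriv x * exp (- 3 * t) \<le> logistic_deriv z"
proof -
  have "exp x * exp (- t) \<le> exp z" and "exp z \<le> exp t * exp x" and "1 \<le> exp t"
    using assms by (auto simp flip: exp_add)
  hence "exp x * exp (- t) \<le> exp z" and "1 + exp z \<le> exp t * (1 + exp x)"
    by (simp_all only: distrib_left mult_1_right add_mono)
  hence "exp x * exp (- t) / (exp t * (1 + exp x))\<^sup>2 \<le> exp z / (1 + exp z)\<^sup>2"
    by (intro frac_le power_mono) auto
  moreover have "exp (- 3 * t) = exp (- t) / (exp t)\<^sup>2"
    by (simp add: power2_eq_square field_simps flip: exp_add)
  hence "logistic_deriv x * exp (- 3 * t) = exp x * exp (- t) / (exp t * (1 + exp x))\<^sup>2"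
    by (simp add: logistic_deriv_def power_mult_distrib)
  ultimately show ?thesis
    by (simp add: logistic_deriv_def)
qed

lemma logistic_increment:
  assumes "\<bar>u\<bar> \<le> t"
  obtains S where "logistic (x + u) - logistic x = u * S"
    "logistic_deriv x * exp (- 3 * t) \<le> S" "S \<le> logistic_deriv x * exp (3 * t)"
proof -
  obtain z where z: "\<bar>z - x\<bar> \<le> \<bar>u\<bar>" "logistic (x + u) - logistic x = u * logistic_deriv z"
    using mean_value_real[OF has_real_derivative_logistic, of x "x + u"] by auto
  have "logistic_deriv z * exp (- 3 * t) \<le> logistic_deriv x"
    using z(1) assms by (intro logistic_deriv_lower) auto
  hence "logistic_deriv z \<le> logistic_deriv x * exp (3 * t)"
    by (simp add: exp_minus field_simps)
  thus ?thesis
    using that z logistic_deriv_lower[of z x t] assms by auto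
qed

lemma finite_vpairs [simp]: "finite (vpairs n)"
  by (rule finite_subset[of _ "{..<n} \<times> {..<n}"]) (auto simp: vpairs_def)

lemma finite_offdiag [simp]: "finite (offdiag n)"
  by (rule finite_subset[of _ "{..<n} \<times> {..<n}"]) (auto simp: offdiag_def)

lemma sum_offdiag_rows: "(\<Sum>i<n. \<Sum>l\<in>{..<n} - {i}. g i l) = (\<Sum>(i,j)\<in>offdiag n. g i j)"
proof -
  have "offdiag n = Sigma {..<n} (\<lambda>i. {..<n} - {i})"
    by (auto simp: offdiag_def)
  thus ?thesis
    by (simp add: sum.Sigma)
qed

lemma sum_offdiag_vpairs: "(\<Sum>(i,j)\<in>offdiag n. g i j) = (\<Sum>(i,j)\<in>vpairs n. g i j + g j i)"
proof -
  have "offdiag n = vpairs n \<union> prod.swap ` vpairs n" and "vpairs n \<inter> prod.swap ` vpairs n = {}"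
    by (auto simp: offdiag_def vpairs_def image_iff)
  hence "(\<Sum>(i,j)\<in>offdiag n. g i j) = (\<Sum>(i,j)\<in>vpairs n. g i j) + (\<Sum>(i,j)\<in>prod.swap ` vpairs n. g i j)"
    by (simp add: sum.union_disjoint)
  also have "(\<Sum>(i,j)\<in>prod.swap ` vpairs n. g i j) = (\<Sum>(i,j)\<in>vpairs n. g j i)"
    by (subst sum.reindex) (auto simp: case_prod_unfold)
  finally show ?thesis
    by (simp add: sum.distrib case_prod_unfold)
qed

lemma sum_vpairs_sym_weighted:
  fixes f :: "nat \<Rightarrow> nat \<Rightarrow> real" and w :: "nat \<Rightarrow> real"
  assumes "\<And>i j. f i j = f j i"
  shows "(\<Sum>(i,j)\<in>vpairs n. (w i + w j) * f i j) = (\<Sum>i<n. w i * (\<Sum>l\<in>{..<n} - {i}. f i l))"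
proof -
  have "(\<Sum>i<n. w i * (\<Sum>l\<in>{..<n} - {i}. f i l)) = (\<Sum>i<n. \<Sum>l\<in>{..<n} - {i}. w i * f i l)"
    by (intro sum.cong refl) (rule sum_distrib_left)
  also have "\<dots> = (\<Sum>(i,j)\<in>vpairs n. w i * f i j + w j * f j i)"
    by (simp add: sum_offdiag_rows sum_offdiag_vpairs)
  also have "\<dots> = (\<Sum>(i,j)\<in>vpairs n. (w i + w j) * f i j)"
    by (simp add: assms algebra_simps)
  finally show ?thesis ..
qed

lemma sum_vpairs_square:
  fixes h :: "nat \<Rightarrow> real"
  shows "(\<Sum>(i,j)\<in>vpairs n. (h i + h j)\<^sup>2) = (real n - 2) * (\<Sum>i<n. (h i)\<^sup>2) + (\<Sum>i<n. h i)\<^sup>2"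
proof -
  have row: "(\<Sum>l\<in>{..<n} - {i}. h i + h l) = (real n - 2) * h i + (\<Sum>l<n. h l)" if "i < n" for i
    using that by (simp add: sum.distrib sum_diff1 of_nat_diff algebra_simps)
  have "(\<Sum>(i,j)\<in>vpairs n. (h i + h j)\<^sup>2) = (\<Sum>i<n. h i * (\<Sum>l\<in>{..<n} - {i}. h i + h l))"
    unfolding power2_eq_square by (rule sum_vpairs_sym_weighted) simp
  also have "\<dots> = (\<Sum>i<n. (real n - 2) * (h i)\<^sup>2 + h i * (\<Sum>l<n. h l))"
    by (intro sum.cong refl) (simp add: row power2_eq_square algebra_simps)
  also have "\<dots> = (real n - 2) * (\<Sum>i<n. (h i)\<^sup>2) + (\<Sum>i<n. h i)\<^sup>2"
    by (simp add: sum.distrib sum_distrib_left[symmetric] sum_distrib_right[symmetric] power2_eq_square)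
  finally show ?thesis .
qed

lemma sum_lessThan_indicator:
  fixes f :: "nat \<Rightarrow> real"
  assumes "J \<subseteq> {..<n}"
  shows "(\<Sum>i<n. of_bool (i \<in> J) * f i) = (\<Sum>i\<in>J. f i)"
proof -
  have "{..<n} \<inter> {i. i \<in> J} = J"
    using assms by blast
  thus ?thesis
    by simp
qed

definition expected_degree :: "nat \<Rightarrow> (nat \<Rightarrow> real) \<Rightarrow> nat \<Rightarrow> real" where
  "expected_degree n \<theta> i = (\<Sum>l\<in>{..<n} - {i}. logistic (\<theta> i + \<theta> l))"

text \<open>The score is the gradient of \<open>loglik n E\<close> at \<open>\<theta>\<close>.\<close>
definition score :: "nat \<Rightarrow> (nat \<times> nat) set \<Rightarrow> (nat \<Rightarrow> real) \<Rightarrow> nat \<Rightarrow> real" where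
  "score n E \<theta> i = degree n E i - expected_degree n \<theta> i"

lemma score_cong:
  "(\<And>l. l < n \<Longrightarrow> \<theta> l = \<eta> l) \<Longrightarrow> i < n \<Longrightarrow> score n E \<theta> i = score n E \<eta> i"
  by (simp add: score_def expected_degree_def)

lemma adj_vpairs: "(i,j) \<in> vpairs n \<Longrightarrow> adj E i j = of_bool ((i,j) \<in> E)"
  by (auto simp: adj_def vpairs_def)

lemma adj_commute: "adj E i j = adj E j i"
  by (auto simp: adj_def min_def max_def)

lemma loglik_vpairs:
  "loglik n E \<theta> = (\<Sum>(i,j)\<in>vpairs n. (\<theta> i + \<theta> j) * of_bool ((i,j) \<in> E) - softplus (\<theta> i + \<theta> j))"
proof -
  have "(\<Sum>i<n. \<theta> i * degree n E i) = (\<Sum>(i,j)\<in>vpairs n. (\<theta> i + \<theta> j) * adj E i j)"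
    unfolding degree_def by (rule sum_vpairs_sym_weighted[symmetric]) (rule adj_commute)
  also have "\<dots> = (\<Sum>(i,j)\<in>vpairs n. (\<theta> i + \<theta> j) * of_bool ((i,j) \<in> E))"
    by (intro sum.cong refl) (auto simp: adj_vpairs)
  finally show ?thesis
    by (simp add: loglik_def softplus_def sum_subtractf case_prod_unfold)
qed

lemma sum_vpairs_residual:
  "(\<Sum>(i,j)\<in>vpairs n. (w i + w j) * (of_bool ((i,j) \<in> E) - logistic (\<theta> i + \<theta> j)))
     = (\<Sum>i<n. w i * score n E \<theta> i)"
proof -
  have "(\<Sum>(i,j)\<in>vpairs n. (w i + w j) * (of_bool ((i,j) \<in> E) - logistic (\<theta> i + \<theta> j)))
      = (\<Sum>(i,j)\<in>vpairs n. (w i + w j) * (adj E i j - logistic (\<theta> i + \<theta> j)))"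
    by (intro sum.cong refl) (auto simp: adj_vpairs)
  also have "\<dots> = (\<Sum>i<n. w i * (\<Sum>l\<in>{..<n} - {i}. adj E i l - logistic (\<theta> i + \<theta> l)))"
    by (rule sum_vpairs_sym_weighted) (simp add: adj_commute add.commute)
  finally show ?thesis
    by (simp add: score_def degree_def expected_degree_def sum_subtractf)
qed

section \<open>Events under the \<open>\<beta>\<close>-model\<close>

lemma sum_Pow_prod_if:
  fixes f g :: "'a \<Rightarrow> 'b::comm_semiring_1"
  assumes "finite A"
  shows "(\<Sum>X\<in>Pow A. \<Prod>x\<in>A. if x \<in> X then f x else g x) = (\<Prod>x\<in>A. f x + g x)"
proof -
  have "(\<Prod>x\<in>A. if x \<in> X then f x else g x) = (\<Prod>x\<in>X. f x) * (\<Prod>x\<in>A - X. g x)" if "X \<subseteq> A" for X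
  proof -
    have "A \<inter> {x. x \<in> X} = X" "A \<inter> - {x. x \<in> X} = A - X"
      using that by auto
    thus ?thesis
      using assms by (simp add: prod.If_cases)
  qed
  thus ?thesis
    using prod_add[OF assms, of f g] by simp
qed

lemma edge_prob_eq_logistic: "edge_prob \<beta> i j = logistic (\<beta> i + \<beta> j)"
  by (simp add: edge_prob_def logistic_def)

lemma edge_prob_nonneg: "0 \<le> edge_prob \<beta> i j"
  and edge_prob_le_one: "edge_prob \<beta> i j \<le> 1"
  using logistic_pos logistic_less_one by (auto simp: edge_prob_eq_logistic less_imp_le)

lemma graph_prob_nonneg: "0 \<le> graph_prob n \<beta> E"
  unfolding graph_prob_def
  by (intro prod_nonneg) (auto simp: edge_prob_nonneg edge_prob_le_one)

lemma sum_graph_prob: "(\<Sum>E\<in>Pow (vpairs n). graph_prob n \<beta> E) = 1"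
  unfolding graph_prob_def case_prod_unfold prod.collapse
  by (subst sum_Pow_prod_if) simp_all

lemma beta_prob_mono:
  "(\<And>E. E \<subseteq> vpairs n \<Longrightarrow> P E \<Longrightarrow> Q E) \<Longrightarrow> beta_prob n \<beta> P \<le> beta_prob n \<beta> Q"
  unfolding beta_prob_def by (intro sum_mono) (auto simp: graph_prob_nonneg)

lemma beta_prob_not: "beta_prob n \<beta> (\<lambda>E. \<not> P E) = 1 - beta_prob n \<beta> P"
proof -
  have "beta_prob n \<beta> P + beta_prob n \<beta> (\<lambda>E. \<not> P E) = (\<Sum>E\<in>Pow (vpairs n). graph_prob n \<beta> E)"
    unfolding beta_prob_def by (subst sum.distrib[symmetric]) (intro sum.cong refl, auto)
  thus ?thesis
    by (simp add: sum_graph_prob)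
qed

lemma beta_prob_disj_le: "beta_prob n \<beta> (\<lambda>E. P E \<or> Q E) \<le> beta_prob n \<beta> P + beta_prob n \<beta> Q"
  unfolding beta_prob_def sum.distrib[symmetric] by (intro sum_mono) (auto simp: graph_prob_nonneg)

lemma beta_prob_Bex_le:
  assumes "finite K"
  shows "beta_prob n \<beta> (\<lambda>E. \<exists>k\<in>K. Q k E) \<le> (\<Sum>k\<in>K. beta_prob n \<beta> (Q k))"
  using assms
proof (induction K rule: finite_induct)
  case empty
  thus ?case by (simp add: beta_prob_def)
next
  case (insert k K)
  have "beta_prob n \<beta> (\<lambda>E. \<exists>k'\<in>insert k K. Q k' E) \<le> beta_prob n \<beta> (Q k) + beta_prob n \<beta> (\<lambda>E. \<exists>k'\<in>K. Q k' E)"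
    using beta_prob_disj_le[of n \<beta> "Q k"] by simp
  thus ?case
    using insert by simp
qed

lemma bernoulli_mgf_le:
  fixes q y :: real
  assumes "0 \<le> q" "q \<le> 1"
  shows "q * exp (y * (1 - q)) + (1 - q) * exp (- (y * q)) \<le> exp (y\<^sup>2 / 8)"
proof -
  have nonneg_case: "p * exp (h * (1 - p)) + (1 - p) * exp (- (h * p)) \<le> exp (h\<^sup>2 / 8)"
    if "0 \<le> h" "0 \<le> p" "p \<le> 1" for h p :: real
  proof -
    have pos: "0 < 1 + p * (exp h - 1)"
      using that by (smt (verit) mult_nonneg_nonneg one_le_exp_iff)
    have "exp (- h * p + ln (1 + p * (exp h - 1))) \<le> exp (h\<^sup>2 / 8)"
      using Hoeffdings_lemma_aux[of h p] that by simp
    also have "exp (- h * p + ln (1 + p * (exp h - 1))) = exp (- h * p) * (1 + p * (exp h - 1))"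
      using pos by (simp only: exp_add exp_ln)
    also have "exp (h * (1 - p)) = exp h * exp (- h * p)"
      by (simp add: algebra_simps flip: exp_add)
    hence "exp (- h * p) * (1 + p * (exp h - 1)) = p * exp (h * (1 - p)) + (1 - p) * exp (- (h * p))"
      by (simp add: algebra_simps)
    finally show ?thesis .
  qed
  show ?thesis
  proof (cases "0 \<le> y")
    case True
    thus ?thesis using nonneg_case[of y q] assms by simp
  next
    case False
    thus ?thesis using nonneg_case[of "- y" "1 - q"] assms by (simp add: algebra_simps)
  qed
qed

definition centered_edge_sum ::
    "nat \<Rightarrow> (nat \<Rightarrow> real) \<Rightarrow> (nat \<Rightarrow> nat \<Rightarrow> real) \<Rightarrow> (nat \<times> nat) set \<Rightarrow> real" where
  "centered_edge_sum n \<beta> c E = (\<Sum>(i,j)\<in>vpairs n. c i j * (of_bool ((i,j) \<in> E) - edge_prob \<beta> i j))"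

lemma mgf_centered_edge_sum:
  "(\<Sum>E\<in>Pow (vpairs n). exp (l * centered_edge_sum n \<beta> c E) * graph_prob n \<beta> E)
     = (\<Prod>(i,j)\<in>vpairs n. edge_prob \<beta> i j * exp (l * c i j * (1 - edge_prob \<beta> i j))
          + (1 - edge_prob \<beta> i j) * exp (- (l * c i j * edge_prob \<beta> i j)))"
proof -
  define q where "q = (\<lambda>e. edge_prob \<beta> (fst e) (snd e))"
  define a where "a = (\<lambda>e. l * c (fst e) (snd e))"
  have "exp (l * centered_edge_sum n \<beta> c E) * graph_prob n \<beta> E
      = (\<Prod>e\<in>vpairs n. if e \<in> E then q e * exp (a e * (1 - q e)) else (1 - q e) * exp (- (a e * q e)))" for E
  proof -
    have "exp (l * centered_edge_sum n \<beta> c E) = (\<Prod>e\<in>vpairs n. exp (a e * (of_bool (e \<in> E) - q e)))"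
      by (simp add: centered_edge_sum_def case_prod_unfold sum_distrib_left exp_sum q_def a_def mult.assoc)
    moreover have "graph_prob n \<beta> E = (\<Prod>e\<in>vpairs n. if e \<in> E then q e else 1 - q e)"
      unfolding graph_prob_def q_def case_prod_unfold by simp
    ultimately show ?thesis
      by (simp add: prod.distrib[symmetric]) (auto intro!: prod.cong simp: algebra_simps)
  qed
  hence "(\<Sum>E\<in>Pow (vpairs n). exp (l * centered_edge_sum n \<beta> c E) * graph_prob n \<beta> E)
      = (\<Prod>e\<in>vpairs n. q e * exp (a e * (1 - q e)) + (1 - q e) * exp (- (a e * q e)))"
    by (simp add: sum_Pow_prod_if)
  thus ?thesis
    by (simp add: case_prod_unfold q_def a_def)
qed

lemma centered_edge_sum_upper_tail:
  assumes "0 < t" "(\<Sum>(i,j)\<in>vpairs n. (c i j)\<^sup>2) \<le> W" "0 < W"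
  shows "beta_prob n \<beta> (\<lambda>E. t \<le> centered_edge_sum n \<beta> c E) \<le> exp (- 2 * t\<^sup>2 / W)"
proof -
  define l where "l = 4 * t / W" \<comment> \<open>the minimiser of \<open>- l * t + l\<^sup>2 * W / 8\<close>\<close>
  have l: "0 < l"
    using assms by (simp add: l_def)
  have "beta_prob n \<beta> (\<lambda>E. t \<le> centered_edge_sum n \<beta> c E)
      \<le> (\<Sum>E\<in>Pow (vpairs n). exp (l * (centered_edge_sum n \<beta> c E - t)) * graph_prob n \<beta> E)"
    unfolding beta_prob_def
  proof (intro sum_mono)
    fix E
    have "1 \<le> exp (l * (centered_edge_sum n \<beta> c E - t))" if "t \<le> centered_edge_sum n \<beta> c E"
      using l that by simp
    thus "(if t \<le> centered_edge_sum n \<beta> c E then graph_prob n \<beta> E else 0)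
        \<le> exp (l * (centered_edge_sum n \<beta> c E - t)) * graph_prob n \<beta> E"
      using graph_prob_nonneg[of n \<beta> E] by (simp add: mult_le_cancel_right1)
  qed
  also have "\<dots> = exp (- l * t) *
      (\<Sum>E\<in>Pow (vpairs n). exp (l * centered_edge_sum n \<beta> c E) * graph_prob n \<beta> E)"
    by (simp add: sum_distrib_left right_diff_distrib exp_diff exp_minus field_simps)
  also have "\<dots> = exp (- l * t) *
      (\<Prod>(i,j)\<in>vpairs n. edge_prob \<beta> i j * exp (l * c i j * (1 - edge_prob \<beta> i j))
          + (1 - edge_prob \<beta> i j) * exp (- (l * c i j * edge_prob \<beta> i j)))"
    by (simp only: mgf_centered_edge_sum)
  also have "\<dots> \<le> exp (- l * t) * (\<Prod>(i,j)\<in>vpairs n. exp ((l * c i j)\<^sup>2 / 8))"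
    by (intro mult_left_mono prod_mono)
       (auto intro!: bernoulli_mgf_le simp: edge_prob_nonneg edge_prob_le_one)
  also have "(\<Prod>(i,j)\<in>vpairs n. exp ((l * c i j)\<^sup>2 / 8)) = exp (l\<^sup>2 / 8 * (\<Sum>(i,j)\<in>vpairs n. (c i j)\<^sup>2))"
    by (simp add: exp_sum[symmetric] case_prod_unfold sum_distrib_left power_mult_distrib)
  also have "exp (- l * t) * \<dots> \<le> exp (- l * t) * exp (l\<^sup>2 / 8 * W)"
    using assms(2) by (simp add: mult_left_mono)
  also have "\<dots> = exp (- 2 * t\<^sup>2 / W)"
    using assms(3) by (simp add: l_def flip: exp_add) (simp add: field_simps power2_eq_square)
  finally show ?thesis .
qed

lemma centered_edge_sum_abs_tail:
  assumes "0 < t" "(\<Sum>(i,j)\<in>vpairs n. (c i j)\<^sup>2) \<le> W" "0 < W"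
  shows "beta_prob n \<beta> (\<lambda>E. t < \<bar>centered_edge_sum n \<beta> c E\<bar>) \<le> 2 * exp (- 2 * t\<^sup>2 / W)"
proof -
  have neg: "centered_edge_sum n \<beta> (\<lambda>i j. - c i j) E = - centered_edge_sum n \<beta> c E" for E
    by (simp add: centered_edge_sum_def case_prod_unfold sum_negf)
  have "beta_prob n \<beta> (\<lambda>E. t < \<bar>centered_edge_sum n \<beta> c E\<bar>)
      \<le> beta_prob n \<beta> (\<lambda>E. t \<le> centered_edge_sum n \<beta> c E \<or> t \<le> centered_edge_sum n \<beta> (\<lambda>i j. - c i j) E)"
    by (intro beta_prob_mono) (auto simp: neg)
  also have "\<dots> \<le> exp (- 2 * t\<^sup>2 / W) + exp (- 2 * t\<^sup>2 / W)"
    using assms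
    by (intro order.trans[OF beta_prob_disj_le] add_mono centered_edge_sum_upper_tail) auto
  finally show ?thesis
    by simp
qed

lemma restr_spaceD:
  assumes "\<theta> \<in> restr_space n r"
  shows "i < r \<Longrightarrow> \<theta> i = \<theta> 0" and "n \<le> i \<Longrightarrow> \<theta> i = 0"
  using assms unfolding restr_space_def by blast+

lemma restr_spaceI:
  "(\<And>i. i < r \<Longrightarrow> \<theta> i = \<theta> 0) \<Longrightarrow> (\<And>i. n \<le> i \<Longrightarrow> \<theta> i = 0) \<Longrightarrow> \<theta> \<in> restr_space n r"
  unfolding restr_space_def by blast

lemma restr_space_upd:
  assumes "\<theta> \<in> restr_space n r" "r \<le> k" "0 < k" "k < n"
  shows "\<theta>(k := x) \<in> restr_space n r"
proof (rule restr_spaceI)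
  fix i
  show "i < r \<Longrightarrow> (\<theta>(k := x)) i = (\<theta>(k := x)) 0"
    using restr_spaceD(1)[OF assms(1), of i] assms(2,3) by simp
  show "n \<le> i \<Longrightarrow> (\<theta>(k := x)) i = 0"
    using restr_spaceD(2)[OF assms(1), of i] assms(4) by simp
qed

definition blocks :: "nat \<Rightarrow> nat \<Rightarrow> nat set set" where
  "blocks n r = insert {..<r} ((\<lambda>j. {j}) ` {r..<n})"

lemma finite_blocks [simp]: "finite (blocks n r)"
  by (simp add: blocks_def)

lemma lessThan_notin_singletons: "{..<r} \<notin> (\<lambda>j. {j}) ` {r..<n::nat}"
proof
  assume "{..<r} \<in> (\<lambda>j. {j}) ` {r..<n}"
  then obtain j where "r \<le> j" "{..<r} = {j}"
    by auto
  hence "j \<in> {..<r}"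
    by blast
  with \<open>r \<le> j\<close> show False
    by auto
qed

lemma sum_blocks: "(\<Sum>J\<in>blocks n r. g J) = g {..<r} + (\<Sum>j\<in>{r..<n}. g {j})"
proof -
  have "(\<Sum>J\<in>blocks n r. g J) = g {..<r} + (\<Sum>J\<in>(\<lambda>j. {j}) ` {r..<n}. g J)"
    unfolding blocks_def by (rule sum.insert) (simp_all add: lessThan_notin_singletons)
  also have "(\<Sum>J\<in>(\<lambda>j. {j}) ` {r..<n}. g J) = (\<Sum>j\<in>{r..<n}. g {j})"
    by (rule sum.reindex_cong[of "\<lambda>j. {j}"]) (simp_all add: inj_on_def)
  finally show ?thesis .
qed

lemma card_blocks: "r \<le> n \<Longrightarrow> real (card (blocks n r)) = real n - real r + 1"
  using sum_blocks[of "\<lambda>_. 1::real" n r] by (simp add: of_nat_diff)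

lemma blocks_subset: "J \<in> blocks n r \<Longrightarrow> r \<le> n \<Longrightarrow> J \<subseteq> {..<n}"
  unfolding blocks_def by auto

lemma blocks_nonempty: "J \<in> blocks n r \<Longrightarrow> 0 < r \<Longrightarrow> J \<noteq> {}"
  unfolding blocks_def by auto

lemma in_some_block:
  assumes "k < n" shows "\<exists>J\<in>blocks n r. k \<in> J"
proof (cases "k < r")
  case True
  thus ?thesis by (simp add: blocks_def)
next
  case False
  hence "{k} \<in> blocks n r"
    using assms by (simp add: blocks_def)
  thus ?thesis by blast
qed

lemma sum_lessThan_blocks:
  assumes "r \<le> n"
  shows "(\<Sum>i<n. f i) = (\<Sum>J\<in>blocks n r. \<Sum>i\<in>J. f i)"
proof -
  have "{..<n} = {..<r} \<union> {r..<n}"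
    using assms by auto
  hence "(\<Sum>i<n. f i) = (\<Sum>i<r. f i) + (\<Sum>j\<in>{r..<n}. f j)"
    by (metis finite_atLeastLessThan finite_lessThan ivl_disj_int_one(2) sum.union_disjoint)
  thus ?thesis
    by (simp add: sum_blocks)
qed

lemma mem_block_iff_mem_zero: "J \<in> blocks n r \<Longrightarrow> i < r \<Longrightarrow> i \<in> J \<longleftrightarrow> 0 \<in> J"
  unfolding blocks_def by auto

lemma restr_space_const_on_block:
  assumes "\<theta> \<in> restr_space n r" "J \<in> blocks n r" "i \<in> J" "j \<in> J"
  shows "\<theta> i = \<theta> j"
proof (cases "J = {..<r}")
  case True
  hence "i < r" "j < r"
    using assms(3,4) by simp_all
  thus ?thesis
    using restr_spaceD(1)[OF assms(1)] by metis
next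
  case False
  with assms(2) obtain k where "J = {k}"
    unfolding blocks_def by blast
  thus ?thesis
    using assms(3,4) by blast
qed

definition block_scores_bounded ::
    "nat \<Rightarrow> nat \<Rightarrow> (nat \<Rightarrow> real) \<Rightarrow> real \<Rightarrow> (nat \<times> nat) set \<Rightarrow> bool" where
  "block_scores_bounded n r \<theta> T E \<longleftrightarrow>
     (\<forall>J\<in>blocks n r. \<bar>\<Sum>i\<in>J. score n E \<theta> i\<bar> \<le> sqrt (card J) * T)"

lemma block_scores_bounded_nonneg:
  assumes "0 < r" "block_scores_bounded n r c T E"
  shows "0 \<le> T"
proof -
  have "{..<r} \<in> blocks n r"
    by (simp add: blocks_def)
  hence "0 \<le> sqrt r * T"
    using assms(2) unfolding block_scores_bounded_def by (smt (verit) card_lessThan)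
  thus ?thesis
    using assms(1) by (simp add: zero_le_mult_iff)
qed

lemma centered_edge_sum_block:
  assumes "J \<subseteq> {..<n}"
  shows "centered_edge_sum n \<beta> (\<lambda>i j. of_bool (i \<in> J) + of_bool (j \<in> J)) E = (\<Sum>i\<in>J. score n E \<beta> i)"
  unfolding centered_edge_sum_def edge_prob_eq_logistic sum_vpairs_residual
  using assms by (rule sum_lessThan_indicator)

lemma sum_vpairs_indicator_square_le:
  assumes "J \<subseteq> {..<n}"
  shows "(\<Sum>(i,j)\<in>vpairs n. (of_bool (i \<in> J) + of_bool (j \<in> J))\<^sup>2) \<le> 2 * card J * real n"
proof -
  have card: "card J \<le> n"
    using card_mono[OF _ assms] by simp
  have "(of_bool (i \<in> J) :: real)\<^sup>2 = of_bool (i \<in> J)" for i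
    by simp
  hence "(\<Sum>i<n. (of_bool (i \<in> J) :: real)) = card J" and "(\<Sum>i<n. (of_bool (i \<in> J) :: real)\<^sup>2) = card J"
    using sum_lessThan_indicator[OF assms, of "\<lambda>_. 1"] by simp_all
  hence "(\<Sum>(i,j)\<in>vpairs n. (of_bool (i \<in> J) + of_bool (j \<in> J))\<^sup>2) = (real n - 2) * card J + (card J)\<^sup>2"
    by (simp add: sum_vpairs_square)
  also have "\<dots> \<le> 2 * card J * real n"
    using mult_right_mono[of "real (card J)" "real n" "real (card J)"] card
    by (simp add: power2_eq_square algebra_simps)
  finally show ?thesis .
qed

lemma exp_minus_two_ln:
  fixes x :: real
  assumes "0 < x"
  shows "exp (- 2 * ln x) = 1 / x\<^sup>2"
proof -
  have "exp (2 * ln x) = x\<^sup>2"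
    using assms exp_of_nat_mult[of 2 "ln x"] by simp
  thus ?thesis
    by (simp add: exp_minus inverse_eq_divide)
qed

lemma block_score_tail:
  assumes "2 \<le> n" "J \<subseteq> {..<n}" "J \<noteq> {}"
  shows "beta_prob n \<beta> (\<lambda>E. sqrt (card J) * sqrt (2 * real n * ln (real n)) < \<bar>\<Sum>i\<in>J. score n E \<beta> i\<bar>)
           \<le> 2 / (real n)\<^sup>2"
proof -
  define t where "t = sqrt (card J) * sqrt (2 * real n * ln (real n))"
  have card: "0 < card J"
    using assms finite_subset[OF assms(2)] by (simp add: card_gt_0_iff)
  have ln: "0 < ln (real n)"
    using assms(1) by simp
  have "t\<^sup>2 = card J * (2 * real n * ln (real n))"
    using ln by (simp add: t_def power_mult_distrib)
  hence exponent: "- 2 * t\<^sup>2 / (2 * card J * real n) = - 2 * ln (real n)"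
    using card assms(1) by (simp add: field_simps)
  have "beta_prob n \<beta> (\<lambda>E. t < \<bar>\<Sum>i\<in>J. score n E \<beta> i\<bar>)
      = beta_prob n \<beta> (\<lambda>E. t < \<bar>centered_edge_sum n \<beta> (\<lambda>i j. of_bool (i \<in> J) + of_bool (j \<in> J)) E\<bar>)"
    by (simp only: centered_edge_sum_block[OF assms(2)])
  also have "\<dots> \<le> 2 * exp (- 2 * t\<^sup>2 / (2 * card J * real n))"
    using card ln assms(1)
    by (intro centered_edge_sum_abs_tail sum_vpairs_indicator_square_le assms(2)) (auto simp: t_def)
  also have "\<dots> = 2 / (real n)\<^sup>2"
    unfolding exponent using exp_minus_two_ln[of "real n"] assms(1) by simp
  finally show ?thesis
    by (simp add: t_def)
qed

lemma beta_prob_block_scores_bounded: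
  assumes "2 \<le> n" "0 < r" "r < n"
  shows "1 - 2 * (real n - real r + 1) / (real n)\<^sup>2
           \<le> beta_prob n \<beta> (block_scores_bounded n r \<beta> (sqrt (2 * real n * ln (real n))))"
proof -
  let ?T = "sqrt (2 * real n * ln (real n))"
  have "beta_prob n \<beta> (\<lambda>E. \<not> block_scores_bounded n r \<beta> ?T E)
      \<le> beta_prob n \<beta> (\<lambda>E. \<exists>J\<in>blocks n r. sqrt (card J) * ?T < \<bar>\<Sum>i\<in>J. score n E \<beta> i\<bar>)"
    unfolding block_scores_bounded_def by (intro beta_prob_mono) (meson not_le)
  also have "\<dots> \<le> (\<Sum>J\<in>blocks n r. beta_prob n \<beta> (\<lambda>E. sqrt (card J) * ?T < \<bar>\<Sum>i\<in>J. score n E \<beta> i\<bar>))"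
    by (rule beta_prob_Bex_le[OF finite_blocks])
  also have "\<dots> \<le> (\<Sum>J\<in>blocks n r. 2 / (real n)\<^sup>2)"
  proof (rule sum_mono)
    fix J assume "J \<in> blocks n r"
    thus "beta_prob n \<beta> (\<lambda>E. sqrt (card J) * ?T < \<bar>\<Sum>i\<in>J. score n E \<beta> i\<bar>) \<le> 2 / (real n)\<^sup>2"
      using assms blocks_subset blocks_nonempty by (intro block_score_tail) auto
  qed
  also have "\<dots> = 2 * (real n - real r + 1) / (real n)\<^sup>2"
    using assms by (simp add: card_blocks)
  finally show ?thesis
    using beta_prob_not[of n \<beta> "block_scores_bounded n r \<beta> ?T"] by linarith
qed

section \<open>Maximising the likelihood over a box\<close>

definition restr_box :: "nat \<Rightarrow> nat \<Rightarrow> (nat \<Rightarrow> real) \<Rightarrow> real \<Rightarrow> (nat \<Rightarrow> real) set" where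
  "restr_box n r c d = {\<theta> \<in> restr_space n r. \<forall>i<n. \<bar>\<theta> i - c i\<bar> \<le> d}"

lemma continuous_on_loglik: "continuous_on UNIV (loglik n E)"
  unfolding loglik_def case_prod_unfold
  by (intro continuous_intros continuous_on_product_coordinates) auto

lemma closed_restr_box: "closed (restr_box n r c d)"
proof -
  have "restr_box n r c d = (\<Inter>i\<in>{i. n \<le> i}. {\<theta>. \<theta> i = 0}) \<inter> (\<Inter>i\<in>{i. i < r}. {\<theta>. \<theta> i = \<theta> 0})
      \<inter> (\<Inter>i\<in>{i. i < n}. {\<theta>. \<bar>\<theta> i - c i\<bar> \<le> d})"
    unfolding restr_box_def restr_space_def by blast
  thus ?thesis
    by (auto intro!: closed_Int closed_INT closed_Collect_eq closed_Collect_le continuous_intros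
                     continuous_on_product_coordinates)
qed

lemma compact_restr_box: "compact (restr_box n r c d)"
proof -
  define S where "S i = (if i < n then {c i - d .. c i + d} else {0})" for i
  have "compactin (product_topology (\<lambda>_. euclidean) UNIV) (PiE UNIV S)"
    by (simp add: compactin_PiE S_def)
  hence "compact (PiE UNIV S)"
    by (simp add: euclidean_product_topology)
  moreover have "restr_box n r c d \<subseteq> PiE UNIV S"
  proof
    fix \<theta> assume \<theta>: "\<theta> \<in> restr_box n r c d"
    have "\<theta> i \<in> S i" for i
    proof (cases "i < n")
      case True
      hence "\<bar>\<theta> i - c i\<bar> \<le> d"
        using \<theta> by (simp add: restr_box_def)
      thus ?thesis
        using True by (auto simp: S_def abs_le_iff)
    next
      case False thus ?thesis using \<theta> restr_spaceD(2)[of \<theta> n r i] by (simp add: restr_box_def S_def)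
    qed
    thus "\<theta> \<in> PiE UNIV S"
      by (simp add: PiE_UNIV_domain)
  qed
  ultimately show ?thesis
    using closed_restr_box by (metis compact_Int_closed inf.absorb_iff2)
qed

lemma restr_box_maximiser:
  assumes "c \<in> restr_space n r" "0 \<le> d"
  obtains \<theta> where "\<theta> \<in> restr_box n r c d" "\<And>\<theta>'. \<theta>' \<in> restr_box n r c d \<Longrightarrow> loglik n E \<theta>' \<le> loglik n E \<theta>"
proof -
  have "c \<in> restr_box n r c d"
    using assms by (simp add: restr_box_def)
  thus ?thesis
    using continuous_attains_sup[OF compact_restr_box _ continuous_on_subset[OF continuous_on_loglik]] that
    by blast
qed

lemma softplus_shift_le: "softplus (x - v) \<le> softplus x - logistic x * v + v\<^sup>2"
proof -
  have "softplus (x - v) + logistic (x - v) * v \<le> softplus x"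
    using softplus_tangent[of "x - v" x] by simp
  moreover have "(logistic x - logistic (x - v)) * v \<le> v\<^sup>2"
  proof -
    have "\<bar>logistic x - logistic (x - v)\<bar> \<le> \<bar>v\<bar>"
      using logistic_lipschitz[of x "x - v"] by simp
    hence "\<bar>logistic x - logistic (x - v)\<bar> * \<bar>v\<bar> \<le> \<bar>v\<bar> * \<bar>v\<bar>"
      by (rule mult_right_mono) simp
    thus ?thesis
      by (simp add: abs_mult[symmetric] power2_eq_square abs_le_iff)
  qed
  ultimately show ?thesis
    by (simp add: algebra_simps)
qed

lemma loglik_decrease_le:
  "loglik n E \<theta> - loglik n E (\<lambda>i. \<theta> i - s * w i)
     \<le> s * (\<Sum>i<n. w i * score n E \<theta> i) + s\<^sup>2 * (\<Sum>(i,j)\<in>vpairs n. (w i + w j)\<^sup>2)"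
proof -
  have pair: "s * u * a + softplus (x - s * u) - softplus x \<le> s * (u * (a - logistic x)) + s\<^sup>2 * u\<^sup>2"
    for x u a
    using softplus_shift_le[of x "s * u"] by (simp add: algebra_simps power_mult_distrib)
  have "loglik n E \<theta> - loglik n E (\<lambda>i. \<theta> i - s * w i)
      = (\<Sum>(i,j)\<in>vpairs n. s * (w i + w j) * of_bool ((i,j) \<in> E)
           + softplus (\<theta> i + \<theta> j - s * (w i + w j)) - softplus (\<theta> i + \<theta> j))"
    unfolding loglik_vpairs sum_subtractf[symmetric]
    by (intro sum.cong refl) (auto simp: algebra_simps)
  also have "\<dots> \<le> (\<Sum>(i,j)\<in>vpairs n. s * ((w i + w j) * (of_bool ((i,j) \<in> E) - logistic (\<theta> i + \<theta> j)))
                     + s\<^sup>2 * (w i + w j)\<^sup>2)"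
    unfolding case_prod_unfold by (intro sum_mono pair)
  also have "\<dots> = s * (\<Sum>i<n. w i * score n E \<theta> i) + s\<^sup>2 * (\<Sum>(i,j)\<in>vpairs n. (w i + w j)\<^sup>2)"
    by (simp add: sum.distrib sum_distrib_left case_prod_unfold sum_vpairs_residual[symmetric])
  finally show ?thesis .
qed

lemma nonneg_if_linear_quadratic_nonneg:
  fixes D U s0 :: real
  assumes "0 < s0" "\<And>s. 0 < s \<Longrightarrow> s \<le> s0 \<Longrightarrow> 0 \<le> s * D + s\<^sup>2 * U"
  shows "0 \<le> D"
proof (rule tendsto_lowerbound)
  show "((\<lambda>s. D + s * U) \<longlongrightarrow> D) (at_right 0)"
    by (auto intro!: tendsto_eq_intros)
  show "at_right (0::real) \<noteq> bot"
    by simp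
  have "0 \<le> D + s * U" if "0 < s" "s \<le> s0" for s
  proof -
    have "0 \<le> s * (D + s * U)"
      using assms(2)[OF that] by (simp add: power2_eq_square algebra_simps)
    thus ?thesis
      using that by (simp add: zero_le_mult_iff)
  qed
  thus "\<forall>\<^sub>F s in at_right 0. 0 \<le> D + s * U"
    using assms(1) by (auto simp: eventually_at_right_field intro: exI[of _ s0])
qed

lemma loglik_first_order:
  assumes "0 < s0" "\<And>s. 0 < s \<Longrightarrow> s \<le> s0 \<Longrightarrow> loglik n E (\<lambda>i. \<theta> i - s * w i) \<le> loglik n E \<theta>"
  shows "0 \<le> (\<Sum>i<n. w i * score n E \<theta> i)"
  using assms(1)
proof (rule nonneg_if_linear_quadratic_nonneg)
  fix s :: real assume "0 < s" "s \<le> s0"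
  hence "loglik n E (\<lambda>i. \<theta> i - s * w i) \<le> loglik n E \<theta>"
    by (rule assms(2))
  thus "0 \<le> s * (\<Sum>i<n. w i * score n E \<theta> i) + s\<^sup>2 * (\<Sum>(i,j)\<in>vpairs n. (w i + w j)\<^sup>2)"
    using loglik_decrease_le[of n E \<theta> s w] by linarith
qed

lemma loglik_concave:
  assumes "0 \<le> t" "t \<le> 1"
  shows "(1 - t) * loglik n E \<theta> + t * loglik n E \<eta> \<le> loglik n E (\<lambda>i. (1 - t) * \<theta> i + t * \<eta> i)"
proof -
  have "(1 - t) * loglik n E \<theta> + t * loglik n E \<eta>
      = (\<Sum>(i,j)\<in>vpairs n. ((1 - t) * (\<theta> i + \<theta> j) + t * (\<eta> i + \<eta> j)) * of_bool ((i,j) \<in> E)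
          - ((1 - t) * softplus (\<theta> i + \<theta> j) + t * softplus (\<eta> i + \<eta> j)))"
    unfolding loglik_vpairs sum_distrib_left sum.distrib[symmetric]
    by (intro sum.cong refl) (auto simp: algebra_simps)
  also have "\<dots> \<le> (\<Sum>(i,j)\<in>vpairs n. ((1 - t) * (\<theta> i + \<theta> j) + t * (\<eta> i + \<eta> j)) * of_bool ((i,j) \<in> E)
          - softplus ((1 - t) * (\<theta> i + \<theta> j) + t * (\<eta> i + \<eta> j)))"
    unfolding case_prod_unfold by (intro sum_mono diff_left_mono softplus_convex assms)
  also have "\<dots> = loglik n E (\<lambda>i. (1 - t) * \<theta> i + t * \<eta> i)"
    unfolding loglik_vpairs by (intro sum.cong refl) (auto simp: algebra_simps)
  finally show ?thesis .
qed

lemma restr_space_convex: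
  assumes "\<theta> \<in> restr_space n r" "\<eta> \<in> restr_space n r"
  shows "(\<lambda>i. (1 - t) * \<theta> i + t * \<eta> i) \<in> restr_space n r"
proof (rule restr_spaceI)
  fix i
  show "i < r \<Longrightarrow> (1 - t) * \<theta> i + t * \<eta> i = (1 - t) * \<theta> 0 + t * \<eta> 0"
    using restr_spaceD(1)[OF assms(1), of i] restr_spaceD(1)[OF assms(2), of i] by simp
  show "n \<le> i \<Longrightarrow> (1 - t) * \<theta> i + t * \<eta> i = 0"
    using restr_spaceD(2)[OF assms(1), of i] restr_spaceD(2)[OF assms(2), of i] by simp
qed

lemma restr_box_convex:
  assumes "\<theta> \<in> restr_box n r c d" "\<eta> \<in> restr_box n r c d" "0 \<le> t" "t \<le> 1"
  shows "(\<lambda>i. (1 - t) * \<theta> i + t * \<eta> i) \<in> restr_box n r c d"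
proof -
  have "\<bar>(1 - t) * \<theta> i + t * \<eta> i - c i\<bar> \<le> d" if "i < n" for i
  proof -
    have "\<bar>(1 - t) * \<theta> i + t * \<eta> i - c i\<bar> = \<bar>(1 - t) * (\<theta> i - c i) + t * (\<eta> i - c i)\<bar>"
      by (simp add: algebra_simps)
    also have "\<dots> \<le> (1 - t) * \<bar>\<theta> i - c i\<bar> + t * \<bar>\<eta> i - c i\<bar>"
      using assms(3,4) by (simp add: abs_triangle_ineq[THEN order_trans] abs_mult)
    also have "\<dots> \<le> (1 - t) * d + t * d"
      using assms that by (intro add_mono mult_left_mono) (auto simp: restr_box_def)
    finally show ?thesis
      by (simp add: algebra_simps)
  qed
  thus ?thesis
    using assms by (auto simp: restr_box_def intro: restr_space_convex)
qed

lemma exists_small_step: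
  fixes a e :: "nat \<Rightarrow> real"
  assumes "\<And>i. i < n \<Longrightarrow> 0 < e i"
  obtains t where "0 < t" "t < 1" "\<forall>i<n. t * a i < e i"
proof -
  have "\<forall>\<^sub>F t in at_right 0. \<forall>i\<in>{..<n}. t * a i < e i"
  proof (rule eventually_ball_finite[OF finite_lessThan], rule ballI)
    fix i assume "i \<in> {..<n}"
    moreover have "((\<lambda>t. t * a i) \<longlongrightarrow> 0) (at_right 0)"
      by (auto intro!: tendsto_eq_intros)
    ultimately show "\<forall>\<^sub>F t in at_right 0. t * a i < e i"
      using assms by (intro order_tendstoD(2)) auto
  qed
  moreover have "\<forall>\<^sub>F t in at_right 0. 0 < t \<and> t < (1::real)"
    unfolding eventually_at_right_field by (intro exI[of _ 1]) auto
  ultimately have "\<forall>\<^sub>F t in at_right 0. (0 < t \<and> t < 1) \<and> (\<forall>i\<in>{..<n}. t * a i < e i)"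
    by (rule eventually_conj[rotated])
  then obtain t where "0 < t" "t < 1" "\<forall>i\<in>{..<n}. t * a i < e i"
    using eventually_happens'[OF trivial_limit_at_right_real] by blast
  thus ?thesis
    using that by auto
qed

text \<open>A short step from \<open>\<theta>\<close> towards any \<open>b\<close> stays in the box, so concavity turns the maximality of
  \<open>\<theta>\<close> on the box into global maximality.\<close>
lemma restr_mle_if_interior_maximiser:
  assumes box: "\<theta> \<in> restr_box n r c d"
    and max: "\<And>\<theta>'. \<theta>' \<in> restr_box n r c d \<Longrightarrow> loglik n E \<theta>' \<le> loglik n E \<theta>"
    and interior: "\<And>i. i < n \<Longrightarrow> \<bar>\<theta> i - c i\<bar> < d"
  shows "is_restr_mle n r E \<theta>"
  unfolding is_restr_mle_def
proof (intro conjI ballI)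
  show \<theta>: "\<theta> \<in> restr_space n r"
    using box by (simp add: restr_box_def)
  fix b assume b: "b \<in> restr_space n r"
  have slack: "\<And>i. i < n \<Longrightarrow> 0 < d - \<bar>\<theta> i - c i\<bar>"
    using interior by simp
  obtain t where t: "0 < t" "t < 1" and small: "\<forall>i<n. t * \<bar>b i - \<theta> i\<bar> < d - \<bar>\<theta> i - c i\<bar>"
    by (rule exists_small_step[OF slack, where a = "\<lambda>i. \<bar>b i - \<theta> i\<bar>"])
  define \<eta> where "\<eta> = (\<lambda>i. (1 - t) * \<theta> i + t * b i)"
  have "\<bar>\<eta> i - c i\<bar> \<le> d" if "i < n" for i
  proof -
    have "\<bar>\<eta> i - c i\<bar> = \<bar>(\<theta> i - c i) + t * (b i - \<theta> i)\<bar>"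
      by (simp add: \<eta>_def algebra_simps)
    also have "\<dots> \<le> \<bar>\<theta> i - c i\<bar> + t * \<bar>b i - \<theta> i\<bar>"
      using t abs_triangle_ineq[of "\<theta> i - c i" "t * (b i - \<theta> i)"] by (simp add: abs_mult)
    finally show ?thesis
      using small[rule_format, OF that] by linarith
  qed
  moreover have "\<eta> \<in> restr_space n r"
    unfolding \<eta>_def using \<theta> b by (rule restr_space_convex)
  ultimately have "loglik n E \<eta> \<le> loglik n E \<theta>"
    by (intro max) (simp add: restr_box_def)
  hence "(1 - t) * loglik n E \<theta> + t * loglik n E b \<le> loglik n E \<theta>"
    using loglik_concave[of t n E \<theta> b] t unfolding \<eta>_def by linarith
  thus "loglik n E b \<le> loglik n E \<theta>"
    using t by (simp add: algebra_simps)
qed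

section \<open>The error bound on the concentration event\<close>

lemma inverse_logistic_deriv: "(1 + exp x)\<^sup>2 / exp x = 1 / logistic_deriv x"
  by (simp add: logistic_deriv_def)

lemma curvature_in_offdiag_image:
  assumes "i < n" "j < n" "i \<noteq> j"
  shows "1 / logistic_deriv (\<beta> i + \<beta> j)
           \<in> (\<lambda>(i,j). (1 + exp (\<beta> i + \<beta> j))\<^sup>2 / exp (\<beta> i + \<beta> j)) ` offdiag n"
  using assms by (auto simp: offdiag_def inverse_logistic_deriv intro!: image_eqI[of _ _ "(i,j)"])

lemma cn_bn_bounds:
  assumes "i < n" "j < n" "i \<noteq> j"
  shows "cn n \<beta> \<le> 1 / logistic_deriv (\<beta> i + \<beta> j)" and "1 / logistic_deriv (\<beta> i + \<beta> j) \<le> bn n \<beta>"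
  using curvature_in_offdiag_image[OF assms, of \<beta>] by (auto simp: cn_def bn_def)

lemma cn_pos:
  assumes "2 \<le> n"
  shows "0 < cn n \<beta>"
proof -
  have "(0, 1) \<in> offdiag n"
    using assms by (simp add: offdiag_def)
  hence "offdiag n \<noteq> {}"
    by blast
  thus ?thesis
    unfolding cn_def by (subst Min_gr_iff) auto
qed

lemma cn_le_bn: "2 \<le> n \<Longrightarrow> cn n \<beta> \<le> bn n \<beta>"
  using cn_bn_bounds[of 0 n 1 \<beta>] by simp

lemma logistic_deriv_bn_cn:
  assumes "i < n" "j < n" "i \<noteq> j"
  shows "1 / bn n \<beta> \<le> logistic_deriv (\<beta> i + \<beta> j)" and "logistic_deriv (\<beta> i + \<beta> j) \<le> 1 / cn n \<beta>"
proof -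
  have pos: "0 < logistic_deriv (\<beta> i + \<beta> j)" "0 < cn n \<beta>"
    using assms logistic_deriv_pos by (auto intro: cn_pos)
  have "0 < bn n \<beta>"
    using cn_bn_bounds(2)[OF assms, of \<beta>] pos(1) by (meson divide_pos_pos less_le_trans zero_less_one)
  hence "1 / bn n \<beta> \<le> 1 / (1 / logistic_deriv (\<beta> i + \<beta> j))"
    using pos by (intro divide_left_mono cn_bn_bounds(2)[OF assms]) auto
  moreover have "1 / (1 / logistic_deriv (\<beta> i + \<beta> j)) \<le> 1 / cn n \<beta>"
    using pos by (intro divide_left_mono cn_bn_bounds(1)[OF assms]) auto
  ultimately show "1 / bn n \<beta> \<le> logistic_deriv (\<beta> i + \<beta> j)" "logistic_deriv (\<beta> i + \<beta> j) \<le> 1 / cn n \<beta>"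
    by simp_all
qed

lemma logistic_increment_bounds:
  assumes "\<bar>u\<bar> \<le> 2 * \<delta>" "exp (6 * \<delta>) \<le> 2" "1 / B \<le> logistic_deriv x" "logistic_deriv x \<le> 1 / C"
  obtains S where "logistic (x + u) - logistic x = u * S" "1 / (2 * B) \<le> S" "S \<le> 2 / C"
proof -
  obtain S where S: "logistic (x + u) - logistic x = u * S"
    "logistic_deriv x * exp (- 3 * (2 * \<delta>)) \<le> S" "S \<le> logistic_deriv x * exp (3 * (2 * \<delta>))"
    using logistic_increment[OF assms(1)] .
  have "1 / 2 \<le> exp (- 3 * (2 * \<delta>))"
    using assms(2) by (simp add: exp_minus field_simps)
  hence "logistic_deriv x * (1 / 2) \<le> logistic_deriv x * exp (- 3 * (2 * \<delta>))"
    using logistic_deriv_pos[of x] by (intro mult_left_mono) auto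
  hence "logistic_deriv x * (1 / 2) \<le> S"
    using S(2) by linarith
  moreover have "exp (3 * (2 * \<delta>)) \<le> 2"
    using assms(2) by simp
  hence "logistic_deriv x * exp (3 * (2 * \<delta>)) \<le> logistic_deriv x * 2"
    using logistic_deriv_pos[of x] by (intro mult_left_mono) auto
  hence "S \<le> logistic_deriv x * 2"
    using S(3) by linarith
  ultimately show ?thesis
    using that[OF S(1)] assms(3,4) by simp
qed

lemma sum_le_sqrt_card_mult_sqrt_sum_squares:
  fixes f :: "'a \<Rightarrow> real"
  shows "(\<Sum>i\<in>I. f i) \<le> sqrt (card I) * sqrt (\<Sum>i\<in>I. (f i)\<^sup>2)"
proof -
  have "(\<Sum>i\<in>I. f i) \<le> sqrt ((\<Sum>i\<in>I. f i)\<^sup>2)"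
    by simp
  also have "\<dots> \<le> sqrt ((\<Sum>i\<in>I. (f i)\<^sup>2) * card I)"
    by (rule real_sqrt_le_mono) (rule sum_squared_le_sum_of_squares)
  finally show ?thesis
    by (simp add: real_sqrt_mult mult.commute)
qed

lemma sum_const_block_le:
  fixes h s :: "nat \<Rightarrow> real"
  assumes "finite J" "J \<noteq> {}" "\<And>i j. i \<in> J \<Longrightarrow> j \<in> J \<Longrightarrow> h i = h j"
    and "\<bar>\<Sum>i\<in>J. s i\<bar> \<le> sqrt (card J) * T"
  shows "(\<Sum>i\<in>J. h i * s i) \<le> sqrt (\<Sum>i\<in>J. (h i)\<^sup>2) * T"
proof -
  obtain j where j: "j \<in> J"
    using assms(2) by blast
  have "(\<Sum>i\<in>J. h i * s i) = h j * (\<Sum>i\<in>J. s i)" and "(\<Sum>i\<in>J. (h i)\<^sup>2) = card J * (h j)\<^sup>2"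
    using assms(3)[OF _ j] by (simp_all add: sum_distrib_left)
  moreover have "h j * (\<Sum>i\<in>J. s i) \<le> \<bar>h j\<bar> * (sqrt (card J) * T)"
    using assms(4) by (smt (verit) abs_ge_zero abs_mult abs_le_iff mult_left_mono)
  ultimately show ?thesis
    by (simp add: real_sqrt_mult mult_ac)
qed

lemma sqrt_le_of_le_mult_sqrt:
  fixes a b Q :: real
  assumes "0 < a" "0 \<le> b" "0 \<le> Q" "a * Q \<le> b * sqrt Q"
  shows "sqrt Q \<le> b / a"
proof (cases "Q = 0")
  case False
  hence pos: "0 < sqrt Q"
    using assms(3) by simp
  have "a * sqrt Q * sqrt Q \<le> b * sqrt Q"
    using assms(3,4) by (simp add: mult.assoc)
  hence "a * sqrt Q \<le> b"
    using pos by (rule mult_right_le_imp_le)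
  thus ?thesis
    using assms(1) by (simp add: field_simps)
qed (use assms in simp)

lemma le_of_card_mult_le:
  fixes m L T :: real
  assumes "1 \<le> m" "0 \<le> T" "m * L \<le> sqrt m * T"
  shows "L \<le> T"
proof (cases "L \<le> 0")
  case False
  have "1 \<le> sqrt m"
    using assms(1) by simp
  hence "sqrt m * 1 \<le> sqrt m * sqrt m"
    by (intro mult_left_mono) auto
  hence "sqrt m \<le> m"
    using assms(1) by simp
  hence "sqrt m * L \<le> sqrt m * T"
    using assms(3) False by (smt (verit) mult_right_mono)
  thus ?thesis
    using assms(1) by simp
qed (use assms in simp)

text \<open>The condition \<open>exp (6 * \<delta>) \<le> 2\<close> keeps the slope of the logistic function on the box within a
  factor 2 of its value at \<open>c\<close>.\<close>
locale box_maximiser =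
  fixes n r :: nat and E :: "(nat \<times> nat) set" and c \<theta> :: "nat \<Rightarrow> real" and \<delta> B C T :: real
  assumes r: "0 < r" "r < n"
    and c: "c \<in> restr_space n r"
    and exp_\<delta>: "exp (6 * \<delta>) \<le> 2"
    and B: "0 < B" and C: "0 < C"
    and curvature: "\<And>i j. i < n \<Longrightarrow> j < n \<Longrightarrow> i \<noteq> j \<Longrightarrow>
                       1 / B \<le> logistic_deriv (c i + c j) \<and> logistic_deriv (c i + c j) \<le> 1 / C"
    and scores: "block_scores_bounded n r c T E"
    and box: "\<theta> \<in> restr_box n r c \<delta>"
    and max: "\<And>\<theta>'. \<theta>' \<in> restr_box n r c \<delta> \<Longrightarrow> loglik n E \<theta>' \<le> loglik n E \<theta>"
begin

lemma dev_le: "i < n \<Longrightarrow> \<bar>\<theta> i - c i\<bar> \<le> \<delta>"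
  using box by (simp add: restr_box_def)

lemma \<delta>_nonneg: "0 \<le> \<delta>"
  using dev_le[of 0] r by linarith

lemma T_nonneg: "0 \<le> T"
  using block_scores_bounded_nonneg[OF r(1) scores] .

lemma \<theta>_restr_space: "\<theta> \<in> restr_space n r"
  using box by (simp add: restr_box_def)

lemma dev_const_on_block: "J \<in> blocks n r \<Longrightarrow> i \<in> J \<Longrightarrow> j \<in> J \<Longrightarrow> \<theta> i - c i = \<theta> j - c j"
  using restr_space_const_on_block[OF \<theta>_restr_space] restr_space_const_on_block[OF c] by metis

lemma first_order_in_box:
  assumes "0 < s0" "\<And>s. 0 < s \<Longrightarrow> s \<le> s0 \<Longrightarrow> (\<lambda>i. \<theta> i - s * w i) \<in> restr_box n r c \<delta>"
  shows "0 \<le> (\<Sum>i<n. w i * score n E \<theta> i)"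
  using assms(1) by (rule loglik_first_order) (use assms(2) max in blast)

lemma score_towards_center_nonneg: "0 \<le> (\<Sum>i<n. (\<theta> i - c i) * score n E \<theta> i)"
proof (rule first_order_in_box)
  fix s :: real assume "0 < s" "s \<le> 1"
  moreover have "c \<in> restr_box n r c \<delta>"
    using c \<delta>_nonneg by (simp add: restr_box_def)
  ultimately have "(\<lambda>i. (1 - s) * \<theta> i + s * c i) \<in> restr_box n r c \<delta>"
    using box by (intro restr_box_convex) auto
  thus "(\<lambda>i. \<theta> i - s * (\<theta> i - c i)) \<in> restr_box n r c \<delta>"
    by (simp add: algebra_simps)
qed simp

lemma logistic_increment_at_center:
  assumes "i < n" "j < n" "i \<noteq> j"
  obtains S where "logistic (\<theta> i + \<theta> j) - logistic (c i + c j) = ((\<theta> i - c i) + (\<theta> j - c j)) * S"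
    "1 / (2 * B) \<le> S" "S \<le> 2 / C"
proof -
  have "\<bar>(\<theta> i - c i) + (\<theta> j - c j)\<bar> \<le> 2 * \<delta>"
    using dev_le[OF assms(1)] dev_le[OF assms(2)] by linarith
  then obtain S where S: "logistic (c i + c j + ((\<theta> i - c i) + (\<theta> j - c j))) - logistic (c i + c j)
      = ((\<theta> i - c i) + (\<theta> j - c j)) * S" "1 / (2 * B) \<le> S" "S \<le> 2 / C"
    using logistic_increment_bounds[OF _ exp_\<delta>] curvature[OF assms] by metis
  show ?thesis
    by (rule that[of S]) (use S in \<open>simp_all add: algebra_simps\<close>)
qed

text \<open>Strong monotonicity of the score: on the box the slope of the logistic function is at least
  \<open>1 / (2 * B)\<close>.\<close>
lemma sum_sq_dev_le_score_gap:
  "(real n - 2) / (2 * B) * (\<Sum>i<n. (\<theta> i - c i)\<^sup>2) \<le> (\<Sum>i<n. (\<theta> i - c i) * (score n E c i - score n E \<theta> i))"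
proof -
  define h where "h i = \<theta> i - c i" for i
  have "(real n - 2) / (2 * B) * (\<Sum>i<n. (h i)\<^sup>2) \<le> ((real n - 2) * (\<Sum>i<n. (h i)\<^sup>2) + (\<Sum>i<n. h i)\<^sup>2) / (2 * B)"
    using B by (simp add: divide_right_mono)
  also have "\<dots> = (\<Sum>(i,j)\<in>vpairs n. (h i + h j)\<^sup>2) / (2 * B)"
    by (simp add: sum_vpairs_square)
  also have "\<dots> = (\<Sum>(i,j)\<in>vpairs n. (h i + h j)\<^sup>2 / (2 * B))"
    by (simp add: sum_divide_distrib case_prod_unfold)
  also have "\<dots> \<le> (\<Sum>(i,j)\<in>vpairs n. (h i + h j) * (logistic (\<theta> i + \<theta> j) - logistic (c i + c j)))"
  proof (rule sum_mono, clarify)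
    fix i j assume "(i, j) \<in> vpairs n"
    hence "i < n" "j < n" "i \<noteq> j"
      by (auto simp: vpairs_def)
    then obtain S where S: "logistic (\<theta> i + \<theta> j) - logistic (c i + c j) = (h i + h j) * S" "1 / (2 * B) \<le> S"
      using logistic_increment_at_center unfolding h_def by blast
    have "(h i + h j)\<^sup>2 * (1 / (2 * B)) \<le> (h i + h j)\<^sup>2 * S"
      using S(2) by (intro mult_left_mono) auto
    thus "(h i + h j)\<^sup>2 / (2 * B) \<le> (h i + h j) * (logistic (\<theta> i + \<theta> j) - logistic (c i + c j))"
      by (simp add: S(1) power2_eq_square mult_ac)
  qed
  also have "\<dots> = (\<Sum>i<n. h i * score n E c i) - (\<Sum>i<n. h i * score n E \<theta> i)"
    unfolding sum_vpairs_residual[symmetric] sum_subtractf[symmetric]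
    by (intro sum.cong refl) (auto simp: algebra_simps)
  finally show ?thesis
    by (simp add: h_def sum_subtractf right_diff_distrib)
qed

text \<open>Cauchy-Schwarz over the \<open>n - r + 1\<close> blocks, on each of which \<open>\<theta> - c\<close> is constant.\<close>
lemma score_center_le:
  "(\<Sum>i<n. (\<theta> i - c i) * score n E c i) \<le> T * sqrt (real n - real r + 1) * sqrt (\<Sum>i<n. (\<theta> i - c i)\<^sup>2)"
proof -
  define h where "h i = \<theta> i - c i" for i
  define q where "q J = (\<Sum>i\<in>J. (h i)\<^sup>2)" for J
  have "(\<Sum>i<n. h i * score n E c i) = (\<Sum>J\<in>blocks n r. \<Sum>i\<in>J. h i * score n E c i)"
    using r by (simp add: sum_lessThan_blocks)
  also have "\<dots> \<le> (\<Sum>J\<in>blocks n r. sqrt (q J) * T)"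
  proof (rule sum_mono)
    fix J assume J: "J \<in> blocks n r"
    show "(\<Sum>i\<in>J. h i * score n E c i) \<le> sqrt (q J) * T"
      unfolding q_def
    proof (rule sum_const_block_le)
      show "finite J" "J \<noteq> {}"
        using J r blocks_subset blocks_nonempty finite_subset by (metis finite_lessThan less_imp_le)+
      show "h i = h j" if "i \<in> J" "j \<in> J" for i j
        using dev_const_on_block[OF J that] by (simp add: h_def)
      show "\<bar>\<Sum>i\<in>J. score n E c i\<bar> \<le> sqrt (card J) * T"
        using scores J by (simp add: block_scores_bounded_def)
    qed
  qed
  also have "\<dots> = T * (\<Sum>J\<in>blocks n r. sqrt (q J))"
    by (simp add: sum_distrib_left mult.commute)
  also have "\<dots> \<le> T * (sqrt (card (blocks n r)) * sqrt (\<Sum>J\<in>blocks n r. (sqrt (q J))\<^sup>2))"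
    using T_nonneg by (intro mult_left_mono sum_le_sqrt_card_mult_sqrt_sum_squares)
  also have "(\<Sum>J\<in>blocks n r. (sqrt (q J))\<^sup>2) = (\<Sum>i<n. (h i)\<^sup>2)"
    using sum_lessThan_blocks[of r n "\<lambda>i. (h i)\<^sup>2"] r by (simp add: q_def sum_nonneg)
  finally show ?thesis
    using r by (simp add: h_def card_blocks mult.assoc)
qed

lemma l2_dev_le:
  assumes "3 \<le> n"
  shows "sqrt (\<Sum>i<n. (\<theta> i - c i)\<^sup>2) \<le> 2 * B * T * sqrt (real n - real r + 1) / (real n - 2)"
proof -
  let ?Q = "\<Sum>i<n. (\<theta> i - c i)\<^sup>2"
  have "(real n - 2) / (2 * B) * ?Q \<le> T * sqrt (real n - real r + 1) * sqrt ?Q"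
    using sum_sq_dev_le_score_gap score_towards_center_nonneg score_center_le
    by (simp add: sum_subtractf right_diff_distrib)
  hence "sqrt ?Q \<le> T * sqrt (real n - real r + 1) / ((real n - 2) / (2 * B))"
    using assms B T_nonneg r by (intro sqrt_le_of_le_mult_sqrt) (auto simp: sum_nonneg)
  thus ?thesis
    by (simp add: field_simps)
qed

lemma row_score_gap_ge:
  assumes k: "k < n" and dev: "\<bar>\<theta> k - c k\<bar> = \<delta>"
  shows "(real n - 1) * \<delta> / (2 * B) - 2 / C * (\<Sum>l<n. \<bar>\<theta> l - c l\<bar>)
           \<le> sgn (\<theta> k - c k) * (score n E c k - score n E \<theta> k)"
proof -
  define \<sigma> where "\<sigma> = sgn (\<theta> k - c k)"
  have \<sigma>: "\<sigma> * (\<theta> k - c k) = \<delta>" "\<bar>\<sigma>\<bar> \<le> 1"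
    using dev by (auto simp: \<sigma>_def sgn_if)
  have pair: "\<delta> / (2 * B) - 2 / C * \<bar>\<theta> l - c l\<bar> \<le> \<sigma> * (logistic (\<theta> k + \<theta> l) - logistic (c k + c l))"
    if "l \<in> {..<n} - {k}" for l
  proof -
    have l: "l < n" "k \<noteq> l"
      using that by auto
    obtain S where S: "logistic (\<theta> k + \<theta> l) - logistic (c k + c l) = ((\<theta> k - c k) + (\<theta> l - c l)) * S"
      "1 / (2 * B) \<le> S" "S \<le> 2 / C"
      using logistic_increment_at_center[OF k l] by blast
    have "\<delta> * (1 / (2 * B)) \<le> \<delta> * S"
      using \<delta>_nonneg S(2) by (rule mult_left_mono[rotated])
    moreover have "\<bar>\<sigma> * (\<theta> l - c l) * S\<bar> \<le> \<bar>\<theta> l - c l\<bar> * (2 / C)"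
    proof -
      have "0 < S"
        using S(2) B by (smt (verit) divide_pos_pos)
      hence "\<bar>\<sigma> * (\<theta> l - c l) * S\<bar> \<le> \<bar>\<theta> l - c l\<bar> * S"
        using \<sigma>(2) by (simp add: abs_mult mult_left_le_one_le mult_right_mono)
      also have "\<dots> \<le> \<bar>\<theta> l - c l\<bar> * (2 / C)"
        using S(3) by (intro mult_left_mono) auto
      finally show ?thesis .
    qed
    ultimately show ?thesis
      unfolding S(1) using \<sigma>(1) by (simp add: algebra_simps abs_le_iff)
  qed
  have "(real n - 1) * \<delta> / (2 * B) - 2 / C * (\<Sum>l<n. \<bar>\<theta> l - c l\<bar>)
      \<le> (real n - 1) * \<delta> / (2 * B) - 2 / C * (\<Sum>l\<in>{..<n} - {k}. \<bar>\<theta> l - c l\<bar>)"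
    using C by (intro diff_left_mono mult_left_mono sum_mono2) auto
  also have "\<dots> = (\<Sum>l\<in>{..<n} - {k}. \<delta> / (2 * B) - 2 / C * \<bar>\<theta> l - c l\<bar>)"
    using k by (simp add: sum_subtractf sum_distrib_left of_nat_diff)
  also have "\<dots> \<le> (\<Sum>l\<in>{..<n} - {k}. \<sigma> * (logistic (\<theta> k + \<theta> l) - logistic (c k + c l)))"
    by (rule sum_mono) (rule pair)
  also have "\<dots> = \<sigma> * (score n E c k - score n E \<theta> k)"
    by (simp add: score_def expected_degree_def sum_distrib_left sum_subtractf right_diff_distrib)
  finally show ?thesis
    by (simp add: \<sigma>_def)
qed

lemma block_move_in_box:
  assumes J: "J \<in> blocks n r" "k \<in> J" and dev: "\<bar>\<theta> k - c k\<bar> = \<delta>" and s: "0 < s" "s \<le> 2 * \<delta>"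
  defines "w \<equiv> \<lambda>i. sgn (\<theta> k - c k) * of_bool (i \<in> J)"
  shows "(\<lambda>i. \<theta> i - s * w i) \<in> restr_box n r c \<delta>"
proof -
  define \<sigma> where "\<sigma> = sgn (\<theta> k - c k)"
  have \<sigma>: "\<sigma> * \<sigma> = 1" "\<bar>\<sigma>\<bar> = 1" "\<sigma> * (\<theta> k - c k) = \<delta>"
    using dev s by (auto simp: \<sigma>_def sgn_if)
  have J_sub: "J \<subseteq> {..<n}"
    using J(1) r by (intro blocks_subset) auto
  have "(\<lambda>i. \<theta> i - s * w i) \<in> restr_space n r"
  proof (rule restr_spaceI)
    fix i
    show "i < r \<Longrightarrow> \<theta> i - s * w i = \<theta> 0 - s * w 0"
      using restr_spaceD(1)[OF \<theta>_restr_space, of i] mem_block_iff_mem_zero[OF J(1), of i]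
      by (simp add: w_def)
    show "n \<le> i \<Longrightarrow> \<theta> i - s * w i = 0"
      using restr_spaceD(2)[OF \<theta>_restr_space, of i] J_sub by (auto simp: w_def)
  qed
  moreover have "\<bar>\<theta> i - s * w i - c i\<bar> \<le> \<delta>" if "i < n" for i
  proof (cases "i \<in> J")
    case True
    hence eq: "\<theta> i - s * w i - c i = (\<theta> k - c k) - s * \<sigma>"
      using dev_const_on_block[OF J(1) True J(2)] by (simp add: w_def \<sigma>_def)
    have "\<sigma> * (\<theta> i - s * w i - c i) = \<sigma> * (\<theta> k - c k) - s * (\<sigma> * \<sigma>)"
      unfolding eq by (simp add: algebra_simps)
    hence "\<sigma> * (\<theta> i - s * w i - c i) = \<delta> - s"
      using \<sigma> by simp
    moreover have "\<bar>\<sigma> * (\<theta> i - s * w i - c i)\<bar> = \<bar>\<theta> i - s * w i - c i\<bar>"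
      using \<sigma>(2) by (simp add: abs_mult)
    ultimately show ?thesis
      using s by auto
  next
    case False
    thus ?thesis
      using dev_le[OF that] by (simp add: w_def)
  qed
  ultimately show ?thesis
    by (simp add: restr_box_def)
qed

text \<open>First-order optimality when the block containing \<open>k\<close> is moved back into the box.\<close>
lemma boundary_dev_bound:
  assumes k: "k < n" and dev: "\<bar>\<theta> k - c k\<bar> = \<delta>" and \<delta>: "0 < \<delta>"
  shows "(real n - 1) * \<delta> / (2 * B) - 2 / C * (\<Sum>l<n. \<bar>\<theta> l - c l\<bar>) \<le> T"
proof -
  define LB where "LB = (real n - 1) * \<delta> / (2 * B) - 2 / C * (\<Sum>l<n. \<bar>\<theta> l - c l\<bar>)"
  define \<sigma> where "\<sigma> = sgn (\<theta> k - c k)"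
  have \<sigma>: "\<bar>\<sigma>\<bar> = 1"
    using dev \<delta> by (auto simp: \<sigma>_def sgn_if)
  obtain J where J: "J \<in> blocks n r" "k \<in> J"
    using in_some_block[OF k] by blast
  have J_sub: "J \<subseteq> {..<n}"
    using J(1) r by (intro blocks_subset) auto
  have "0 \<le> (\<Sum>i<n. \<sigma> * of_bool (i \<in> J) * score n E \<theta> i)"
    using block_move_in_box[OF J dev] \<delta> unfolding \<sigma>_def by (intro first_order_in_box) auto
  also have "\<dots> = \<sigma> * (\<Sum>i\<in>J. score n E \<theta> i)"
    using sum_lessThan_indicator[OF J_sub, of "\<lambda>i. \<sigma> * score n E \<theta> i"]
    by (simp add: sum_distrib_left mult_ac)
  finally have first_order: "0 \<le> \<sigma> * (\<Sum>i\<in>J. score n E \<theta> i)" .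
  have "LB \<le> \<sigma> * (score n E c i - score n E \<theta> i)" if "i \<in> J" for i
    using row_score_gap_ge[of i] dev_const_on_block[OF J(1) that J(2)] dev J_sub that
    by (auto simp: LB_def \<sigma>_def)
  hence "card J * LB \<le> (\<Sum>i\<in>J. \<sigma> * (score n E c i - score n E \<theta> i))"
    using sum_mono[of J "\<lambda>_. LB"] by simp
  also have "\<dots> \<le> \<sigma> * (\<Sum>i\<in>J. score n E c i)"
    using first_order by (simp add: sum_distrib_left[symmetric] sum_subtractf right_diff_distrib)
  also have "\<dots> \<le> \<bar>\<Sum>i\<in>J. score n E c i\<bar>"
    using abs_ge_self[of "\<sigma> * (\<Sum>i\<in>J. score n E c i)"] \<sigma> by (simp add: abs_mult)
  also have "\<dots> \<le> sqrt (card J) * T"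
    using scores J(1) by (simp add: block_scores_bounded_def)
  finally have bound: "card J * LB \<le> sqrt (card J) * T" .
  have "0 < card J"
    using J finite_subset[OF J_sub] card_gt_0_iff by blast
  hence "LB \<le> T"
    using bound T_nonneg le_of_card_mult_le[of "real (card J)" T LB] by simp
  thus ?thesis
    by (simp add: LB_def)
qed

lemma dev_less:
  assumes n: "3 \<le> n"
    and \<delta>_big: "2 * B / (real n - 1) * (T + 2 / C * sqrt n * (2 * B * T * sqrt (real n - real r + 1) / (real n - 2))) < \<delta>"
    and i: "i < n"
  shows "\<bar>\<theta> i - c i\<bar> < \<delta>"
proof (rule ccontr)
  assume "\<not> \<bar>\<theta> i - c i\<bar> < \<delta>"
  hence dev: "\<bar>\<theta> i - c i\<bar> = \<delta>"
    using dev_le[OF i] by linarith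
  define R where "R = 2 * B * T * sqrt (real n - real r + 1) / (real n - 2)"
  have R: "0 \<le> R"
    using B T_nonneg n r by (simp add: R_def)
  have "0 \<le> 2 * B / (real n - 1) * (T + 2 / C * sqrt n * R)"
    using B C n T_nonneg R by (intro mult_nonneg_nonneg add_nonneg_nonneg divide_nonneg_pos) auto
  hence "0 < \<delta>"
    using \<delta>_big unfolding R_def by linarith
  have "(\<Sum>l<n. \<bar>\<theta> l - c l\<bar>) \<le> sqrt n * sqrt (\<Sum>l<n. (\<theta> l - c l)\<^sup>2)"
    using sum_le_sqrt_card_mult_sqrt_sum_squares[of "\<lambda>l. \<bar>\<theta> l - c l\<bar>" "{..<n}"] by simp
  also have "\<dots> \<le> sqrt n * R"
    using l2_dev_le[OF n] unfolding R_def by (intro mult_left_mono) auto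
  finally have "2 / C * (\<Sum>l<n. \<bar>\<theta> l - c l\<bar>) \<le> 2 / C * (sqrt n * R)"
    using C by (intro mult_left_mono) auto
  hence "(real n - 1) * \<delta> / (2 * B) \<le> T + 2 / C * (sqrt n * R)"
    using boundary_dev_bound[OF i dev \<open>0 < \<delta>\<close>] by linarith
  hence "\<delta> \<le> 2 * B / (real n - 1) * (T + 2 / C * (sqrt n * R))"
    using B n by (simp add: field_simps)
  thus False
    using \<delta>_big unfolding R_def by (simp add: mult.assoc)
qed

end

lemma restr_mle_near_center:
  assumes n: "3 \<le> n" and r: "0 < r" "r < n" and c: "c \<in> restr_space n r"
    and exp_\<delta>: "exp (6 * \<delta>) \<le> 2" and B: "0 < B" and C: "0 < C"
    and curvature: "\<And>i j. i < n \<Longrightarrow> j < n \<Longrightarrow> i \<noteq> j \<Longrightarrow>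
                       1 / B \<le> logistic_deriv (c i + c j) \<and> logistic_deriv (c i + c j) \<le> 1 / C"
    and scores: "block_scores_bounded n r c T E"
    and \<delta>_big: "2 * B / (real n - 1) * (T + 2 / C * sqrt n * (2 * B * T * sqrt (real n - real r + 1) / (real n - 2))) < \<delta>"
  shows "\<exists>b. is_restr_mle n r E b \<and> (\<forall>i<n. \<bar>b i - c i\<bar> \<le> \<delta>)"
proof -
  have "0 \<le> T"
    using block_scores_bounded_nonneg[OF r(1) scores] .
  hence "0 \<le> 2 * B / (real n - 1) * (T + 2 / C * sqrt n * (2 * B * T * sqrt (real n - real r + 1) / (real n - 2)))"
    using B C n r by (intro mult_nonneg_nonneg add_nonneg_nonneg divide_nonneg_pos) auto
  hence "0 \<le> \<delta>"
    using \<delta>_big by linarith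
  then obtain \<theta> where box: "\<theta> \<in> restr_box n r c \<delta>"
    and max: "\<And>\<theta>'. \<theta>' \<in> restr_box n r c \<delta> \<Longrightarrow> loglik n E \<theta>' \<le> loglik n E \<theta>"
    using restr_box_maximiser[OF c] by metis
  interpret box_maximiser n r E c \<theta> \<delta> B C T
    using r c exp_\<delta> B C curvature scores box max by unfold_locales auto
  have "is_restr_mle n r E \<theta>"
    using box max dev_less[OF n \<delta>_big] by (rule restr_mle_if_interior_maximiser)
  thus ?thesis
    using dev_le by blast
qed

text \<open>The second bound is AM-GM: \<open>B + B ^ 3 / C\<^sup>2 * y\<^sup>2 \<ge> 2 * (B\<^sup>2 / C) * y\<close>.\<close>
lemma rate_expr_lower_bounds:
  fixes B C x y :: real
  assumes "0 < C" "C \<le> B" "0 \<le> x"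
  defines "R \<equiv> B + B ^ 3 / C\<^sup>2 * (x + y\<^sup>2)"
  shows "B \<le> R" and "2 * (B\<^sup>2 / C) * y \<le> R"
proof -
  have "0 \<le> B ^ 3 / C\<^sup>2 * x" and "0 \<le> B ^ 3 / C\<^sup>2 * y\<^sup>2"
    using assms by simp_all
  hence R: "B + B ^ 3 / C\<^sup>2 * y\<^sup>2 \<le> R"
    unfolding R_def distrib_left by linarith
  thus "B \<le> R"
    using \<open>0 \<le> B ^ 3 / C\<^sup>2 * y\<^sup>2\<close> by linarith
  have "0 \<le> B * (1 - B * y / C)\<^sup>2"
    using assms by simp
  also have "B * (1 - B * y / C)\<^sup>2 = B + B ^ 3 / C\<^sup>2 * y\<^sup>2 - 2 * (B\<^sup>2 / C) * y"
    using assms(1) by (simp add: power2_eq_square power3_eq_cube field_simps)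
  finally show "2 * (B\<^sup>2 / C) * y \<le> R"
    using R by linarith
qed

lemma sqrt_two_mult_ln:
  fixes x :: real
  assumes "0 < x"
  shows "sqrt (2 * x * ln x) = sqrt 2 * x * sqrt (ln x / x)"
proof -
  have "2 * x * ln x = (sqrt 2 * x)\<^sup>2 * (ln x / x)"
    using assms by (simp add: power2_eq_square)
  hence "sqrt (2 * x * ln x) = sqrt ((sqrt 2 * x)\<^sup>2) * sqrt (ln x / x)"
    by (simp only: real_sqrt_mult)
  thus ?thesis
    using assms by simp
qed

lemma sqrt_diff_plus_one_le:
  assumes "r < n"
  shows "sqrt (real n - real r + 1) \<le> sqrt 2 * sqrt n * sqrt ((real n - real r) / real n)"
proof -
  have "real n - real r + 1 \<le> 2 * real n * ((real n - real r) / real n)"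
    using assms by simp
  hence "sqrt (real n - real r + 1) \<le> sqrt (2 * real n * ((real n - real r) / real n))"
    by (rule real_sqrt_le_mono)
  also have "\<dots> = sqrt 2 * sqrt n * sqrt ((real n - real r) / real n)"
    by (simp only: real_sqrt_mult)
  finally show ?thesis .
qed

lemma ratio_bounds_of_ge_four:
  assumes "4 \<le> n"
  shows "real n / (real n - 1) \<le> 4 / 3" and "(real n)\<^sup>2 / ((real n - 1) * (real n - 2)) \<le> 3"
proof -
  show "real n / (real n - 1) \<le> 4 / 3"
    using assms by (simp add: field_simps)
  have "0 \<le> (real n - 4) * (2 * real n - 1) + 2"
    using assms by simp
  hence "(real n)\<^sup>2 \<le> 3 * ((real n - 1) * (real n - 2))"
    by (simp add: power2_eq_square algebra_simps)
  thus "(real n)\<^sup>2 / ((real n - 1) * (real n - 2)) \<le> 3"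
    using assms by (simp add: divide_le_eq)
qed

lemma error_radius_le_rate:
  fixes n r :: nat and B C :: real
  assumes n: "4 \<le> n" and r: "r < n" and C: "0 < C" "C \<le> B"
  defines "T \<equiv> sqrt (2 * real n * ln (real n))"
  shows "2 * B / (real n - 1) * (T + 2 / C * sqrt n * (2 * B * T * sqrt (real n - real r + 1) / (real n - 2)))
     \<le> 28 * (B + B ^ 3 / C\<^sup>2 * (sqrt r * sqrt (real n - real r) / real n powr (3 / 2)
                + (real n - real r) / real n)) * sqrt (ln (real n) / real n)"
proof -
  define \<rho> where "\<rho> = sqrt (ln (real n) / real n)"
  define y where "y = sqrt ((real n - real r) / real n)"
  define R where "R = B + B ^ 3 / C\<^sup>2 * (sqrt r * sqrt (real n - real r) / real n powr (3 / 2) + y\<^sup>2)"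
  have \<rho>: "0 < \<rho>" and T: "T = sqrt 2 * real n * \<rho>"
    using n by (simp_all add: \<rho>_def T_def sqrt_two_mult_ln)
  have x: "0 \<le> sqrt r * sqrt (real n - real r) / real n powr (3 / 2)" and y: "0 \<le> y"
    using r by (simp_all add: y_def)
  have BR: "B \<le> R"
    unfolding R_def by (rule rate_expr_lower_bounds(1)[OF C x])
  have "2 * (B\<^sup>2 / C) * y \<le> R"
    unfolding R_def by (rule rate_expr_lower_bounds(2)[OF C x])
  hence BCy: "(B\<^sup>2 / C) * y \<le> R / 2"
    by (simp add: mult_ac)
  have term1: "2 * B / (real n - 1) * T \<le> 4 * R * \<rho>"
  proof -
    have "sqrt 2 \<le> (3 / 2 :: real)"
      by (rule real_le_lsqrt) (auto simp: power2_eq_square)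
    hence "sqrt 2 * (real n / (real n - 1)) \<le> (3 / 2) * (4 / 3)"
      using n ratio_bounds_of_ge_four(1)[OF n] by (intro mult_mono) auto
    have "2 * B / (real n - 1) * T = (2 * B * \<rho>) * (sqrt 2 * (real n / (real n - 1)))"
      using n by (simp add: T field_simps)
    also have "\<dots> \<le> (2 * B * \<rho>) * ((3 / 2) * (4 / 3))"
      using C \<rho> \<open>sqrt 2 * (real n / (real n - 1)) \<le> (3 / 2) * (4 / 3)\<close> by (intro mult_left_mono) auto
    also have "\<dots> \<le> 4 * R * \<rho>"
      using BR \<rho> by simp
    finally show ?thesis .
  qed
  have term2: "2 * B / (real n - 1) * (2 / C * sqrt n * (2 * B * T * sqrt (real n - real r + 1) / (real n - 2)))
      \<le> 24 * R * \<rho>"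
  proof -
    have "2 * B / (real n - 1) * (2 / C * sqrt n * (2 * B * T * sqrt (real n - real r + 1) / (real n - 2)))
        \<le> 2 * B / (real n - 1) * (2 / C * sqrt n * (2 * B * T * (sqrt 2 * sqrt n * y) / (real n - 2)))"
      using n C sqrt_diff_plus_one_le[OF r] T \<rho> unfolding y_def by (intro mult_left_mono divide_right_mono) auto
    also have "\<dots> = 16 * ((B\<^sup>2 / C) * y) * \<rho> * ((real n)\<^sup>2 / ((real n - 1) * (real n - 2)))"
      using n C by (simp add: T field_simps power2_eq_square)
    also have "\<dots> \<le> 16 * (R / 2) * \<rho> * 3"
      using BCy ratio_bounds_of_ge_four(2)[OF n] \<rho> C n BR y by (intro mult_mono) auto
    finally show ?thesis
      by simp
  qed
  have "2 * B / (real n - 1) * (T + 2 / C * sqrt n * (2 * B * T * sqrt (real n - real r + 1) / (real n - 2)))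
      \<le> 28 * R * \<rho>"
    using term1 term2 by (simp add: distrib_left)
  thus ?thesis
    using r by (simp add: R_def y_def \<rho>_def)
qed

section \<open>Uniqueness of the restricted MLE\<close>

lemma loglik_midpoint_gt:
  assumes "(i, j) \<in> vpairs n" "b i + b j \<noteq> b' i + b' j"
  shows "(loglik n E b + loglik n E b') / 2 < loglik n E (\<lambda>k. (b k + b' k) / 2)"
proof -
  define f where "f a x = x * a - softplus x" for a x :: real
  have le: "(f a x + f a y) / 2 \<le> f a ((x + y) / 2)" for a x y
    using softplus_convex[of "1 / 2" x y] by (simp add: f_def field_simps)
  have lt: "(f a x + f a y) / 2 < f a ((x + y) / 2)" if "x \<noteq> y" for a x y
    using softplus_midpoint_strict[OF that] by (simp add: f_def field_simps)
  have "(loglik n E b + loglik n E b') / 2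
      = (\<Sum>(i,j)\<in>vpairs n. (f (of_bool ((i,j) \<in> E)) (b i + b j) + f (of_bool ((i,j) \<in> E)) (b' i + b' j)) / 2)"
    by (simp add: loglik_vpairs f_def sum.distrib[symmetric] sum_divide_distrib case_prod_unfold)
  also have "\<dots> < (\<Sum>(i,j)\<in>vpairs n. f (of_bool ((i,j) \<in> E)) ((b i + b j + (b' i + b' j)) / 2))"
  proof (rule sum_strict_mono_ex1)
    show "\<exists>p\<in>vpairs n. (case p of (i, j) \<Rightarrow> (f (of_bool ((i,j) \<in> E)) (b i + b j) + f (of_bool ((i,j) \<in> E)) (b' i + b' j)) / 2)
        < (case p of (i, j) \<Rightarrow> f (of_bool ((i,j) \<in> E)) ((b i + b j + (b' i + b' j)) / 2))"
      using assms lt by (intro bexI[of _ "(i, j)"]) auto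
  qed (use le in auto)
  also have "\<dots> = loglik n E (\<lambda>k. (b k + b' k) / 2)"
    by (simp add: loglik_vpairs f_def add_divide_distrib algebra_simps)
  finally show ?thesis .
qed

lemma eq_zero_of_pair_sums_zero:
  fixes h :: "nat \<Rightarrow> real"
  assumes "3 \<le> n" "i < n" "\<And>p q. (p, q) \<in> vpairs n \<Longrightarrow> h p + h q = 0"
  shows "h i = 0"
proof -
  have sum0: "h p + h q = 0" if "p < n" "q < n" "p \<noteq> q" for p q
    using assms(3)[of p q] assms(3)[of q p] that by (cases "p < q") (auto simp: vpairs_def add.commute)
  have "2 \<le> card ({..<n} - {i})"
    using assms(1,2) by simp
  then obtain S where "S \<subseteq> {..<n} - {i}" "card S = 2"
    by (meson obtain_subset_with_card_n)
  then obtain j k where "j \<noteq> k" "j < n" "k < n" "j \<noteq> i" "k \<noteq> i"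
    by (auto simp: card_2_iff)
  hence "h i + h j = 0" "h i + h k = 0" "h j + h k = 0"
    using sum0 assms(2) by auto
  thus ?thesis
    by linarith
qed

text \<open>For \<open>n = 2\<close> the likelihood of the single pair is strictly monotone in the pair sum, so no
  maximiser exists and uniqueness holds vacuously.\<close>
lemma no_restr_mle_two_vertices:
  assumes "r \<le> 1"
  shows "\<not> is_restr_mle 2 r E b"
proof
  assume mle: "is_restr_mle 2 r E b"
  define a :: real where "a = of_bool ((0::nat, 1::nat) \<in> E)"
  define t :: real where "t = (if a = 1 then 1 else - 1)"
  have vpairs: "vpairs 2 = {(0, 1)}"
    by (auto simp: vpairs_def)
  have loglik: "loglik 2 E \<theta> = (\<theta> 0 + \<theta> 1) * a - softplus (\<theta> 0 + \<theta> 1)" for \<theta>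
    by (simp add: loglik_vpairs vpairs a_def)
  have b: "b \<in> restr_space 2 r"
    using mle by (simp add: is_restr_mle_def)
  have "b(1 := b 1 + t) \<in> restr_space 2 r"
    using b assms by (intro restr_space_upd) auto
  hence "loglik 2 E (b(1 := b 1 + t)) \<le> loglik 2 E b"
    using mle by (simp add: is_restr_mle_def)
  moreover have "loglik 2 E b < loglik 2 E (b(1 := b 1 + t))"
  proof (cases "a = 1")
    case True
    have "b 0 + b 1 - softplus (b 0 + b 1) < (b 0 + b 1 + 1) - softplus (b 0 + b 1 + 1)"
      using softplus_strict_mono[of "- (b 0 + b 1 + 1)" "- (b 0 + b 1)"]
        softplus_minus[of "b 0 + b 1"] softplus_minus[of "b 0 + b 1 + 1"] by simp
    thus ?thesis
      using True by (simp add: loglik t_def add.assoc)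
  next
    case False
    hence "a = 0"
      by (simp add: a_def)
    thus ?thesis
      using softplus_strict_mono[of "b 0 + b 1 - 1" "b 0 + b 1"]
      by (simp add: loglik t_def algebra_simps)
  qed
  ultimately show False
    by simp
qed

lemma restr_mle_unique:
  assumes r: "1 \<le> r" "r \<le> n - 1" and b: "is_restr_mle n r E b" and b': "is_restr_mle n r E b'"
  shows "b = b'"
proof (rule ccontr)
  assume "b \<noteq> b'"
  have br: "b \<in> restr_space n r" and b'r: "b' \<in> restr_space n r"
    using b b' by (simp_all add: is_restr_mle_def)
  have n: "3 \<le> n"
    using r no_restr_mle_two_vertices[of r E b] b by (cases "n = 2") auto
  obtain i where i: "b i \<noteq> b' i"
    using \<open>b \<noteq> b'\<close> by blast
  hence "i < n"
    using restr_spaceD(2)[OF br, of i] restr_spaceD(2)[OF b'r, of i] by (cases "i < n") auto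
  then obtain p q where pq: "(p, q) \<in> vpairs n" "b p + b q \<noteq> b' p + b' q"
    using eq_zero_of_pair_sums_zero[OF n, of i "\<lambda>k. b k - b' k"] i by (force simp: algebra_simps)
  define m where "m = (\<lambda>k. (1 - 1 / 2) * b k + 1 / 2 * b' k)"
  have "m \<in> restr_space n r"
    unfolding m_def using br b'r by (rule restr_space_convex)
  hence "loglik n E m \<le> loglik n E b"
    using b by (simp add: is_restr_mle_def)
  moreover have "loglik n E b = loglik n E b'"
    using b b' br b'r by (auto simp: is_restr_mle_def intro: order.antisym)
  moreover have "(loglik n E b + loglik n E b') / 2 < loglik n E m"
    using loglik_midpoint_gt[OF pq] by (simp add: m_def add_divide_distrib)
  ultimately show False
    by simp
qed

lemma rate_pos_le_cond_quantity:
  assumes "2 \<le> n" "r < n"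
  shows "0 < rate n r \<beta>" and "rate n r \<beta> \<le> cond_quantity n r \<beta>"
proof -
  define B C where "B = bn n \<beta>" and "C = cn n \<beta>"
  have C: "0 < C" "C \<le> B"
    using cn_pos[OF assms(1)] cn_le_bn[OF assms(1)] by (simp_all add: B_def C_def)
  have "0 \<le> sqrt (real r) * sqrt (real n - real r) / real n powr (3 / 2) + (real n - real r) / real n"
    using assms(2) by simp
  hence "B \<le> rate n r \<beta>"
    unfolding rate_def B_def[symmetric] C_def[symmetric] using C by simp
  thus pos: "0 < rate n r \<beta>"
    using C by linarith
  have "1 \<le> B / C"
    using C by simp
  moreover have "0 \<le> B ^ 3 / C ^ 3 * (real r * (real n - real r) / (real n)\<^sup>2)"
    using C assms(2) by simp
  ultimately have "1 \<le> B / C + B ^ 3 / C ^ 3 * (real r * (real n - real r) / (real n)\<^sup>2)"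
    by linarith
  hence "1 * rate n r \<beta> \<le> (B / C + B ^ 3 / C ^ 3 * (real r * (real n - real r) / (real n)\<^sup>2)) * rate n r \<beta>"
    using pos by (intro mult_right_mono) auto
  thus "rate n r \<beta> \<le> cond_quantity n r \<beta>"
    by (simp add: cond_quantity_def B_def C_def)
qed

lemma rate_small_of_cond_quantity_small:
  assumes "2 \<le> n" "r < n" "\<bar>cond_quantity n r \<beta>\<bar> \<le> \<epsilon> * \<bar>sqrt (real n / ln (real n))\<bar>"
  shows "rate n r \<beta> * sqrt (ln (real n) / real n) \<le> \<epsilon>"
proof -
  have ln: "0 < ln (real n)"
    using assms(1) by simp
  have "rate n r \<beta> \<le> \<bar>cond_quantity n r \<beta>\<bar>"
    using rate_pos_le_cond_quantity(2)[OF assms(1,2)] by (meson abs_ge_self order_trans)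
  hence "rate n r \<beta> * sqrt (ln (real n) / real n) \<le> \<bar>cond_quantity n r \<beta>\<bar> * sqrt (ln (real n) / real n)"
    using ln by (intro mult_right_mono) auto
  also have "\<dots> \<le> \<epsilon> * (sqrt (real n / ln (real n)) * sqrt (ln (real n) / real n))"
    using mult_right_mono[OF assms(3), of "sqrt (ln (real n) / real n)"] ln by (simp add: mult.assoc)
  also have "sqrt (real n / ln (real n)) * sqrt (ln (real n) / real n) = 1"
    using ln assms(1) by (simp add: real_sqrt_mult[symmetric])
  finally show ?thesis
    by simp
qed

lemma block_scores_bounded_cong:
  assumes "r \<le> n" "\<And>i. i < n \<Longrightarrow> \<theta> i = \<eta> i"
  shows "block_scores_bounded n r \<theta> T E \<longleftrightarrow> block_scores_bounded n r \<eta> T E"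
proof -
  have "(\<Sum>i\<in>J. score n E \<theta> i) = (\<Sum>i\<in>J. score n E \<eta> i)" if "J \<in> blocks n r" for J
    using blocks_subset[OF that assms(1)] score_cong[of n \<theta> \<eta>] assms(2) by (intro sum.cong) auto
  thus ?thesis
    by (simp add: block_scores_bounded_def)
qed

lemma sup_dist_le: "0 < n \<Longrightarrow> (\<And>i. i < n \<Longrightarrow> \<bar>x i - y i\<bar> \<le> d) \<Longrightarrow> sup_dist n x y \<le> d"
  unfolding sup_dist_def by (subst Max_le_iff) auto

lemma truncation_in_restr_space:
  assumes "\<forall>i<r. \<beta> i = \<beta> 0" "r \<le> n"
  shows "(\<lambda>i. if i < n then \<beta> i else 0) \<in> restr_space n r"
proof (rule restr_spaceI)
  fix i assume "i < r"
  moreover have "\<beta> i = \<beta> 0"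
    using assms(1) \<open>i < r\<close> by blast
  ultimately show "(if i < n then \<beta> i else 0) = (if 0 < n then \<beta> 0 else 0)"
    using assms(2) by simp
qed simp

text \<open>The box has radius \<open>\<delta> = 30 * rate * sqrt (ln n / n)\<close>: the constant 30 exceeds the 28 of
  \<open>error_radius_le_rate\<close>, and \<open>ln 2 / 180 = ln 2 / (6 * 30)\<close> gives \<open>exp (6 * \<delta>) \<le> 2\<close>.\<close>
lemma restr_mle_error_bound:
  assumes n: "4 \<le> n" and r: "0 < r" "r < n" and tied: "\<forall>i<r. \<beta> i = \<beta> 0"
    and small: "rate n r \<beta> * sqrt (ln (real n) / real n) \<le> ln 2 / 180"
  shows "1 - 2 * (real n - real r + 1) / (real n)\<^sup>2
           \<le> beta_prob n \<beta> (\<lambda>E. \<exists>b. is_restr_mle n r E b \<and>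
                 sup_dist n b \<beta> \<le> 30 * rate n r \<beta> * sqrt (ln (real n) / real n))"
proof -
  define \<delta> where "\<delta> = 30 * rate n r \<beta> * sqrt (ln (real n) / real n)"
  define T where "T = sqrt (2 * real n * ln (real n))"
  define c where "c = (\<lambda>i. if i < n then \<beta> i else 0)"
  have c: "c \<in> restr_space n r"
    unfolding c_def using r(2) by (intro truncation_in_restr_space[OF tied]) simp
  have "6 * \<delta> \<le> ln 2"
    using small by (simp add: \<delta>_def)
  hence exp_\<delta>: "exp (6 * \<delta>) \<le> 2"
    using exp_le_cancel_iff[of "6 * \<delta>" "ln 2"] by simp
  have C: "0 < cn n \<beta>" "cn n \<beta> \<le> bn n \<beta>"
    using n by (simp_all add: cn_pos cn_le_bn)
  have curvature: "1 / bn n \<beta> \<le> logistic_deriv (c i + c j) \<and> logistic_deriv (c i + c j) \<le> 1 / cn n \<beta>"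
    if "i < n" "j < n" "i \<noteq> j" for i j
    using logistic_deriv_bn_cn[OF that, of \<beta>] that by (simp add: c_def)
  have "0 < rate n r \<beta> * sqrt (ln (real n) / real n)"
    using rate_pos_le_cond_quantity(1)[of n r \<beta>] n r by simp
  hence radius: "2 * bn n \<beta> / (real n - 1) * (T + 2 / cn n \<beta> * sqrt n *
      (2 * bn n \<beta> * T * sqrt (real n - real r + 1) / (real n - 2))) < \<delta>"
    using error_radius_le_rate[OF n r(2) C] unfolding T_def[symmetric] rate_def[symmetric] \<delta>_def
    by linarith
  have "beta_prob n \<beta> (block_scores_bounded n r \<beta> T)
      \<le> beta_prob n \<beta> (\<lambda>E. \<exists>b. is_restr_mle n r E b \<and> sup_dist n b \<beta> \<le> \<delta>)"
  proof (rule beta_prob_mono)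
    fix E assume "block_scores_bounded n r \<beta> T E"
    hence "block_scores_bounded n r c T E"
      using r by (subst block_scores_bounded_cong[of r n c \<beta>]) (auto simp: c_def)
    then obtain b where "is_restr_mle n r E b" "\<forall>i<n. \<bar>b i - c i\<bar> \<le> \<delta>"
      using restr_mle_near_center[OF _ r c exp_\<delta> _ C(1) curvature _ radius] n C by fastforce
    thus "\<exists>b. is_restr_mle n r E b \<and> sup_dist n b \<beta> \<le> \<delta>"
      using r by (intro exI[of _ b]) (auto intro!: sup_dist_le simp: c_def)
  qed
  moreover have "1 - 2 * (real n - real r + 1) / (real n)\<^sup>2 \<le> beta_prob n \<beta> (block_scores_bounded n r \<beta> T)"
    using beta_prob_block_scores_bounded[of n r \<beta>] n r by (simp add: T_def)
  ultimately show ?thesis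
    by (simp add: \<delta>_def)
qed

lemma eventually_restr_mle_error_bound:
  assumes tied: "\<forall>n\<ge>2. 1 \<le> r n \<and> r n \<le> n - 1 \<and> (\<forall>i<r n. beta n i = beta n 0)"
    and small: "(\<lambda>n. cond_quantity n (r n) (beta n)) \<in> o(\<lambda>n. sqrt (real n / ln (real n)))"
  shows "\<forall>\<^sub>F n in sequentially. 1 - 2 * (real n - real (r n) + 1) / (real n)\<^sup>2
           \<le> beta_prob n (beta n) (\<lambda>E. \<exists>b. is_restr_mle n (r n) E b \<and>
                 sup_dist n b (beta n) \<le> 30 * rate n (r n) (beta n) * sqrt (ln (real n) / real n))"
proof -
  have "\<forall>\<^sub>F n in sequentially.
      \<bar>cond_quantity n (r n) (beta n)\<bar> \<le> ln 2 / 180 * \<bar>sqrt (real n / ln (real n))\<bar>"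
    using landau_o.smallD[OF small, of "ln 2 / 180"] by simp
  thus ?thesis
    using eventually_ge_at_top[of 4]
  proof eventually_elim
    case (elim n)
    hence "2 \<le> n"
      by simp
    hence "1 \<le> r n" "r n \<le> n - 1" and tied_n: "\<forall>i<r n. beta n i = beta n 0"
      using tied by blast+
    hence r: "0 < r n" "r n < n"
      using \<open>2 \<le> n\<close> by linarith+
    have "rate n (r n) (beta n) * sqrt (ln (real n) / real n) \<le> ln 2 / 180"
      using rate_small_of_cond_quantity_small[OF \<open>2 \<le> n\<close> r(2) elim(1)] .
    thus ?case
      by (rule restr_mle_error_bound[OF elim(2) r tied_n])
  qed
qed

theorem lemma7:
  shows "(\<exists>C>0. \<forall>(beta :: nat \<Rightarrow> nat \<Rightarrow> real) (r :: nat \<Rightarrow> nat).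
            ((\<forall>n\<ge>2. 1 \<le> r n \<and> r n \<le> n - 1 \<and> (\<forall>i<r n. beta n i = beta n 0)) \<and>
             (\<lambda>n. cond_quantity n (r n) (beta n)) \<in> o(\<lambda>n. sqrt (real n / ln (real n))))
            \<longrightarrow> (\<forall>\<^sub>F n in sequentially.
                   beta_prob n (beta n)
                     (\<lambda>E. \<exists>b. is_restr_mle n (r n) E b \<and>
                        sup_dist n b (beta n) \<le> C * rate n (r n) (beta n) * sqrt (ln (real n) / real n))
                   \<ge> 1 - 2 * (real n - real (r n) + 1) / (real n)\<^sup>2))
       \<and> (\<forall>n r E b b'. 1 \<le> r \<and> r \<le> n - 1 \<and> E \<subseteq> vpairs n \<and>
            is_restr_mle n r E b \<and> is_restr_mle n r E b' \<longrightarrow> b = b')"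
  by (intro conjI exI[of _ "30 :: real"] allI impI)
     (simp, blast intro: eventually_restr_mle_error_bound, blast intro: restr_mle_unique)

end
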